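(* Let $d\ge1$ and let $K$ be a real-valued covariance kernel on $\mathbb R^d\times\mathbb R^d$ of class $\mathcal C^{\infty,\infty}_b$. For every integer $M\ge0$ and every integer $\ell\ge0$ there exists a finite constant $A>0$, independent of $n$ and $R$, such that for every $R\ge1$ the eigenvalues $\lambda^{(M,R)}_1\ge\lambda^{(M,R)}_2\ge\cdots\ge0$ of $K^{(M,R)}$ satisfy $$\lambda_n^{(M,R)}\le A\,\frac{R^{\ell+1+d}}{n^{\frac{\ell+1}d}},\qquad n\ge1.$$
   Context: $\mathcal C^{\infty,\infty}_b$: infinitely continuously differentiable in each variable with all derivatives bounded. $K_{\alpha\beta}(x,y)=\partial_x^\alpha\partial_y^\beta K(x,y)$. $S(M)$ is the set of multi-indices $\alpha\in\mathbb N^d$ with $|\alpha|\le M$. $B_R$ is the open ball of radius $R$ centred at $0$. $L^2_{S(M)}(B_R)$ is the Hilbert space of square-integrable $\mathbb R^{S(M)}$-valued functions $f=(f_\alpha)_{\alpha\in S(M)}$ on $B_R$ with $\langle f,g\rangle=\sum_{\alpha\in S(M)}\int_{B_R}f_\alpha g_\alpha$. The operator $K^{(M,R)}$ on $L^2_{S(M)}(B_R)$ is $(K^{(M,R)}f)_\alpha(x)=\sum_{\beta\in S(M)}\int_{B_R}K_{\alpha\beta}(x,y)f_\beta(y)\,dy$; it is compact, self-adjoint and positive, and its eigenvalues are listed in decreasing order with multiplicity. *)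

theory Defs
  imports "HOL-Analysis.Analysis" "HOL-Library.Extended_Nat"
begin

text \<open>Iterated directional derivatives: the head of the list is applied last.\<close>
fun dd :: "('a::real_normed_vector) list \<Rightarrow> ('a \<Rightarrow> real) \<Rightarrow> 'a \<Rightarrow> real" where
  "dd [] f = f"
| "dd (v # vs) f = (\<lambda>z. deriv (\<lambda>t. dd vs f (z + t *\<^sub>R v)) 0)"

definition basis_dirs :: "((real^'d) \<times> (real^'d)) set" where
  "basis_dirs = {(axis i 1, 0) | i. True} \<union> {(0, axis i 1) | i. True}"

definition joint :: "(real^'d \<Rightarrow> real^'d \<Rightarrow> real) \<Rightarrow> ((real^'d) \<times> (real^'d)) \<Rightarrow> real" where
  "joint K = (\<lambda>z. K (fst z) (snd z))"

definition Cinf_b :: "(real^'d \<Rightarrow> real^'d \<Rightarrow> real) \<Rightarrow> bool" where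
  "Cinf_b K \<longleftrightarrow> (\<forall>vs. set vs \<subseteq> basis_dirs \<longrightarrow>
      continuous_on UNIV (dd vs (joint K)) \<and> bounded (range (dd vs (joint K))) \<and>
      (\<forall>v\<in>basis_dirs. \<forall>z. ((\<lambda>t. dd vs (joint K) (z + t *\<^sub>R v))
           has_real_derivative dd (v # vs) (joint K) z) (at 0)))"

definition covariance_kernel :: "('a \<Rightarrow> 'a \<Rightarrow> real) \<Rightarrow> bool" where
  "covariance_kernel K \<longleftrightarrow> (\<forall>x y. K x y = K y x) \<and>
     (\<forall>(n::nat) (xs::nat \<Rightarrow> 'a) (c::nat \<Rightarrow> real).
        (\<Sum>i<n. \<Sum>j<n. c i * c j * K (xs i) (xs j)) \<ge> 0)"

definition S :: "nat \<Rightarrow> ('d::finite \<Rightarrow> nat) set" where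
  "S M = {\<alpha>. sum \<alpha> UNIV \<le> M}"

definition coord_list :: "('d::finite \<Rightarrow> nat) \<Rightarrow> 'd list" where
  "coord_list \<alpha> = concat (map (\<lambda>i. replicate (\<alpha> i) i) (SOME xs. distinct xs \<and> set xs = UNIV))"

text \<open>K_{alpha beta}(x,y) = d_x^alpha d_y^beta K(x,y).\<close>
definition Kab :: "(real^'d \<Rightarrow> real^'d \<Rightarrow> real) \<Rightarrow> ('d \<Rightarrow> nat) \<Rightarrow> ('d \<Rightarrow> nat)
    \<Rightarrow> real^'d \<Rightarrow> real^'d \<Rightarrow> real" where
  "Kab K \<alpha> \<beta> x y = dd (map (\<lambda>i. (axis i 1, 0)) (coord_list \<alpha>) @
                         map (\<lambda>i. (0, axis i 1)) (coord_list \<beta>)) (joint K) (x, y)"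

text \<open>Membership in L^2_{S(M)}(B_R) (functions represented pointwise, components indexed by S(M)).\<close>
definition L2S :: "nat \<Rightarrow> real \<Rightarrow> (real^'d \<Rightarrow> ('d \<Rightarrow> nat) \<Rightarrow> real) \<Rightarrow> bool" where
  "L2S M R f \<longleftrightarrow> (\<forall>\<beta>\<in>S M. (\<lambda>y. indicator (ball 0 R) y * f y \<beta>) \<in> borel_measurable lborel \<and>
                         set_integrable lborel (ball 0 R) (\<lambda>y. (f y \<beta>)^2))"

definition Kop :: "(real^'d \<Rightarrow> real^'d \<Rightarrow> real) \<Rightarrow> nat \<Rightarrow> real
    \<Rightarrow> (real^'d \<Rightarrow> ('d \<Rightarrow> nat) \<Rightarrow> real) \<Rightarrow> real^'d \<Rightarrow> ('d \<Rightarrow> nat) \<Rightarrow> real" where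
  "Kop K M R f x \<alpha> = (\<Sum>\<beta>\<in>S M. LINT y:ball 0 R|lborel. Kab K \<alpha> \<beta> x y * f y \<beta>)"

definition is_eigfun :: "(real^'d \<Rightarrow> real^'d \<Rightarrow> real) \<Rightarrow> nat \<Rightarrow> real \<Rightarrow> real
    \<Rightarrow> (real^'d \<Rightarrow> ('d \<Rightarrow> nat) \<Rightarrow> real) \<Rightarrow> bool" where
  "is_eigfun K M R \<mu> f \<longleftrightarrow> L2S M R f \<and>
     (\<forall>\<alpha>\<in>S M. AE x in lborel. x \<in> ball 0 R \<longrightarrow> Kop K M R f x \<alpha> = \<mu> * f x \<alpha>)"

text \<open>Number of eigenvalues strictly greater than t, counted with multiplicity:
  the dimension (in L^2, i.e. modulo a.e. equality) of the span of eigenspaces for eigenvalues > t.\<close>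
definition count_above :: "(real^'d \<Rightarrow> real^'d \<Rightarrow> real) \<Rightarrow> nat \<Rightarrow> real \<Rightarrow> real \<Rightarrow> enat" where
  "count_above K M R t = Sup {enat k | k. \<exists>(fs :: nat \<Rightarrow> real^'d \<Rightarrow> ('d \<Rightarrow> nat) \<Rightarrow> real) \<mu>s.
      (\<forall>i<k. \<mu>s i > t \<and> is_eigfun K M R (\<mu>s i) (fs i)) \<and>
      (\<forall>c::nat \<Rightarrow> real. (\<forall>\<alpha>\<in>S M. AE x in lborel. x \<in> ball 0 R \<longrightarrow> (\<Sum>i<k. c i * fs i x \<alpha>) = 0)
                 \<longrightarrow> (\<forall>i<k. c i = 0))}"

text \<open>The n-th eigenvalue (n >= 1) in decreasing order, counted with multiplicity
  (equal to 0 if there are fewer than n positive eigenvalues).\<close>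
definition eigval :: "(real^'d \<Rightarrow> real^'d \<Rightarrow> real) \<Rightarrow> nat \<Rightarrow> real \<Rightarrow> nat \<Rightarrow> real" where
  "eigval K M R n = Inf {t. 0 \<le> t \<and> count_above K M R t < enat n}"

end

theory Submission
  imports Defs
begin

text \<open>
  Fix a grid of \<open>m\<^sup>d\<close> cubes of side \<open>h = 2R/m\<close> covering \<open>B\<^sub>R\<close>. On each cube, Taylor expansion
  of \<open>K\<^sub>\<alpha>\<^sub>\<beta>(x, \<cdot>)\<close> to order \<open>\<ell>\<close> in every coordinate of \<open>y\<close> approximates \<open>K\<^sub>\<alpha>\<^sub>\<beta>\<close> on
  \<open>B\<^sub>R \<times> B\<^sub>R\<close> by a separated kernel \<open>\<Sum>\<^sub>j a\<^sub>\<alpha>\<^sub>\<beta>\<^sub>j(x) b\<^sub>j(y)\<close> with \<open>m\<^sup>d(\<ell>+1)\<^sup>d\<close> terms and uniform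
  error \<open>\<epsilon> = O(h\<^sup>\<ell>\<^sup>+\<^sup>1)\<close>. If more than \<open>|S(M)| m\<^sup>d(\<ell>+1)\<^sup>d\<close> independent eigenfunctions had
  eigenvalues above \<open>t\<close>, some nonzero combination \<open>g\<close> of them would be orthogonal to all
  the \<open>b\<^sub>j\<close>; since eigenspaces of distinct eigenvalues are orthogonal,
  \<open>t\<parallel>g\<parallel>\<^sub>2\<^sup>2 \<le> \<langle>K g, g\<rangle> \<le> \<epsilon>\<parallel>g\<parallel>\<^sub>1\<^sup>2 \<le> \<epsilon> |S(M)| |B\<^sub>R| \<parallel>g\<parallel>\<^sub>2\<^sup>2\<close>. Hence
  \<open>\<lambda>\<^sub>n \<le> \<epsilon> |S(M)| |B\<^sub>R| = O(R\<^sup>d h\<^sup>\<ell>\<^sup>+\<^sup>1)\<close> as soon as \<open>|S(M)| m\<^sup>d(\<ell>+1)\<^sup>d < n\<close>, and the choice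
  \<open>m \<approx> n\<^sup>1\<^sup>/\<^sup>d\<close> gives the bound.
\<close>

section \<open>Iterated directional derivatives\<close>

lemma dd_append: "dd (vs @ ws) f = dd vs (dd ws f)"
  by (induction vs) auto

lemma finite_basis_dirs: "finite (basis_dirs :: ((real^'d) \<times> (real^'d)) set)"
proof -
  have "(basis_dirs :: ((real^'d) \<times> (real^'d)) set) =
      (\<lambda>i. (axis i 1, 0)) ` UNIV \<union> (\<lambda>i. (0, axis i 1)) ` UNIV"
    unfolding basis_dirs_def by auto
  then show ?thesis by (metis finite_UnI finite_imageI finite_class.finite_UNIV)
qed

lemma axis_in_basis_dirs [simp]:
  "(axis i 1, 0) \<in> basis_dirs" "(0, axis i 1) \<in> basis_dirs"
  unfolding basis_dirs_def by auto

lemma has_real_derivative_along_line: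
  fixes f :: "'a::real_normed_vector \<Rightarrow> real"
  assumes "\<And>z. ((\<lambda>s. f (z + s *\<^sub>R v)) has_real_derivative f' z) (at 0)"
  shows "((\<lambda>s. f (z + s *\<^sub>R v)) has_real_derivative f' (z + t *\<^sub>R v)) (at t)"
proof -
  have "((\<lambda>s. f ((z + t *\<^sub>R v) + s *\<^sub>R v)) has_real_derivative f' (z + t *\<^sub>R v)) (at 0)"
    by (rule assms)
  moreover have "(\<lambda>s. f ((z + t *\<^sub>R v) + s *\<^sub>R v)) = (\<lambda>s. (\<lambda>s. f (z + s *\<^sub>R v)) (s + t))"
    by (simp add: algebra_simps)
  ultimately show ?thesis
    using DERIV_shift[of "\<lambda>s. f (z + s *\<^sub>R v)" "f' (z + t *\<^sub>R v)" 0 t] by simp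
qed

lemma second_difference_mean_value:
  fixes g gu gwu :: "'a::real_normed_vector \<Rightarrow> real"
  assumes gu: "\<And>z. ((\<lambda>s. g (z + s *\<^sub>R u)) has_real_derivative gu z) (at 0)"
    and gwu: "\<And>z. ((\<lambda>s. gu (z + s *\<^sub>R w)) has_real_derivative gwu z) (at 0)"
    and h: "h > 0"
  shows "\<exists>\<zeta>. norm (\<zeta> - z) \<le> h * (norm u + norm w) \<and>
     g (z + h *\<^sub>R u + h *\<^sub>R w) - g (z + h *\<^sub>R u) - g (z + h *\<^sub>R w) + g z = h\<^sup>2 * gwu \<zeta>"
proof -
  define p where "p s = g ((z + h *\<^sub>R w) + s *\<^sub>R u) - g (z + s *\<^sub>R u)" for s
  have dp: "(p has_real_derivative (gu ((z + h *\<^sub>R w) + s *\<^sub>R u) - gu (z + s *\<^sub>R u))) (at s)" for s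
    unfolding p_def by (rule DERIV_diff; rule has_real_derivative_along_line[where f=g]; rule gu)
  obtain s1 where s1: "0 < s1" "s1 < h"
    "p h - p 0 = (h - 0) * (gu ((z + h *\<^sub>R w) + s1 *\<^sub>R u) - gu (z + s1 *\<^sub>R u))"
    using MVT2[of 0 h p "\<lambda>s. gu ((z + h *\<^sub>R w) + s *\<^sub>R u) - gu (z + s *\<^sub>R u)"] h dp by auto
  define q where "q t = gu ((z + s1 *\<^sub>R u) + t *\<^sub>R w)" for t
  have dq: "(q has_real_derivative gwu ((z + s1 *\<^sub>R u) + t *\<^sub>R w)) (at t)" for t
    unfolding q_def by (rule has_real_derivative_along_line[where f=gu]) (rule gwu)
  obtain t1 where t1: "0 < t1" "t1 < h" "q h - q 0 = (h - 0) * gwu ((z + s1 *\<^sub>R u) + t1 *\<^sub>R w)"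
    using MVT2[of 0 h q "\<lambda>t. gwu ((z + s1 *\<^sub>R u) + t *\<^sub>R w)"] h dq by auto
  have qh: "q h - q 0 = gu ((z + h *\<^sub>R w) + s1 *\<^sub>R u) - gu (z + s1 *\<^sub>R u)"
    unfolding q_def by (simp add: algebra_simps)
  have "norm (((z + s1 *\<^sub>R u) + t1 *\<^sub>R w) - z) \<le> norm (s1 *\<^sub>R u) + norm (t1 *\<^sub>R w)"
    using norm_triangle_ineq[of "s1 *\<^sub>R u" "t1 *\<^sub>R w"] by (simp add: algebra_simps)
  also have "\<dots> \<le> h * norm u + h * norm w"
    using s1 t1 by (intro add_mono mult_right_mono) (auto simp: mult_right_mono)
  finally have close: "norm (((z + s1 *\<^sub>R u) + t1 *\<^sub>R w) - z) \<le> h * (norm u + norm w)"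
    by (simp add: algebra_simps)
  have "g (z + h *\<^sub>R u + h *\<^sub>R w) - g (z + h *\<^sub>R u) - g (z + h *\<^sub>R w) + g z = p h - p 0"
    unfolding p_def by (simp add: algebra_simps)
  also have "\<dots> = h\<^sup>2 * gwu ((z + s1 *\<^sub>R u) + t1 *\<^sub>R w)"
    using s1(3) t1(3) qh by (simp add: power2_eq_square)
  finally show ?thesis using close by blast
qed

text \<open>Schwarz's theorem: both mixed derivatives are limits of the same second difference quotient.\<close>

lemma directional_derivatives_commute:
  fixes g gu gw gwu guw :: "'a::real_normed_vector \<Rightarrow> real"
  assumes gu: "\<And>z. ((\<lambda>s. g (z + s *\<^sub>R u)) has_real_derivative gu z) (at 0)"
    and gw: "\<And>z. ((\<lambda>s. g (z + s *\<^sub>R w)) has_real_derivative gw z) (at 0)"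
    and gwu: "\<And>z. ((\<lambda>s. gu (z + s *\<^sub>R w)) has_real_derivative gwu z) (at 0)"
    and guw: "\<And>z. ((\<lambda>s. gw (z + s *\<^sub>R u)) has_real_derivative guw z) (at 0)"
    and cont: "continuous_on UNIV gwu" "continuous_on UNIV guw"
  shows "gwu z = guw z"
proof (rule ccontr)
  assume ne: "gwu z \<noteq> guw z"
  define e where "e = \<bar>gwu z - guw z\<bar> / 2"
  have e: "e > 0" using ne by (simp add: e_def)
  have "isCont gwu z" "isCont guw z" using cont by (simp_all add: continuous_on_eq_continuous_at)
  obtain d1 where d1: "d1 > 0" "\<forall>y. dist y z < d1 \<longrightarrow> dist (gwu y) (gwu z) < e"
    using \<open>isCont gwu z\<close> e unfolding continuous_at_eps_delta by blast
  obtain d2 where d2: "d2 > 0" "\<forall>y. dist y z < d2 \<longrightarrow> dist (guw y) (guw z) < e"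
    using \<open>isCont guw z\<close> e unfolding continuous_at_eps_delta by blast
  define h where "h = min d1 d2 / (2 * (norm u + norm w + 1))"
  have pos: "2 * (norm u + norm w + 1) > 0"
    by (smt (verit) norm_ge_zero)
  have h: "h > 0" using d1 d2 pos unfolding h_def by (intro divide_pos_pos) auto
  have small: "h * (norm u + norm w) < min d1 d2"
  proof -
    have "h * (norm u + norm w) \<le> h * (norm u + norm w + 1)" using h by simp
    also have "\<dots> = min d1 d2 / 2" unfolding h_def using pos by (simp add: field_simps)
    also have "\<dots> < min d1 d2" using d1(1) d2(1) by (simp add: min_def)
    finally show ?thesis .
  qed
  obtain z1 where z1: "norm (z1 - z) \<le> h * (norm u + norm w)"
    "g (z + h *\<^sub>R u + h *\<^sub>R w) - g (z + h *\<^sub>R u) - g (z + h *\<^sub>R w) + g z = h\<^sup>2 * gwu z1"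
    using second_difference_mean_value[OF gu gwu h] by blast
  obtain z2 where z2: "norm (z2 - z) \<le> h * (norm w + norm u)"
    "g (z + h *\<^sub>R w + h *\<^sub>R u) - g (z + h *\<^sub>R w) - g (z + h *\<^sub>R u) + g z = h\<^sup>2 * guw z2"
    using second_difference_mean_value[OF gw guw h] by blast
  have "h\<^sup>2 * gwu z1 = h\<^sup>2 * guw z2" using z1(2) z2(2) by (simp add: algebra_simps)
  then have eq: "gwu z1 = guw z2" using h by simp
  have "dist z1 z < d1" using z1(1) small by (simp add: dist_norm)
  then have a: "\<bar>gwu z1 - gwu z\<bar> < e" using d1 by (simp add: dist_real_def)
  have "dist z2 z < d2" using z2(1) small by (simp add: dist_norm add.commute)
  then have b: "\<bar>guw z2 - guw z\<bar> < e" using d2 by (simp add: dist_real_def)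
  have "\<bar>gwu z - guw z\<bar> < 2 * e" using a b eq by linarith
  then show False by (simp add: e_def)
qed

context
  fixes K :: "real^'d \<Rightarrow> real^'d \<Rightarrow> real"
  assumes smooth: "Cinf_b K"
begin

lemma Cinf_b_continuous_on: "set vs \<subseteq> basis_dirs \<Longrightarrow> continuous_on UNIV (dd vs (joint K))"
  using smooth unfolding Cinf_b_def by blast

lemma Cinf_b_bounded: "set vs \<subseteq> basis_dirs \<Longrightarrow> bounded (range (dd vs (joint K)))"
  using smooth unfolding Cinf_b_def by blast

lemma Cinf_b_has_derivative: "set vs \<subseteq> basis_dirs \<Longrightarrow> v \<in> basis_dirs \<Longrightarrow>
   ((\<lambda>t. dd vs (joint K) (z + t *\<^sub>R v)) has_real_derivative dd (v # vs) (joint K) z) (at 0)"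
  using smooth unfolding Cinf_b_def by blast

lemma Cinf_b_has_derivative_at: "set vs \<subseteq> basis_dirs \<Longrightarrow> v \<in> basis_dirs \<Longrightarrow>
   ((\<lambda>t. dd vs (joint K) (z + t *\<^sub>R v)) has_real_derivative dd (v # vs) (joint K) (z + s *\<^sub>R v)) (at s)"
  by (rule has_real_derivative_along_line) (rule Cinf_b_has_derivative)

lemma Cinf_b_dd_swap:
  assumes "set vs \<subseteq> basis_dirs" "u \<in> basis_dirs" "w \<in> basis_dirs"
  shows "dd (w # u # vs) (joint K) = dd (u # w # vs) (joint K)"
proof
  fix z
  show "dd (w # u # vs) (joint K) z = dd (u # w # vs) (joint K) z"
  proof (rule directional_derivatives_commute[where g = "dd vs (joint K)"
        and gu = "dd (u # vs) (joint K)" and gw = "dd (w # vs) (joint K)"])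
    show "((\<lambda>s. dd vs (joint K) (z + s *\<^sub>R u)) has_real_derivative dd (u # vs) (joint K) z) (at 0)"
      "((\<lambda>s. dd vs (joint K) (z + s *\<^sub>R w)) has_real_derivative dd (w # vs) (joint K) z) (at 0)"
      "((\<lambda>s. dd (u # vs) (joint K) (z + s *\<^sub>R w)) has_real_derivative dd (w # u # vs) (joint K) z) (at 0)"
      "((\<lambda>s. dd (w # vs) (joint K) (z + s *\<^sub>R u)) has_real_derivative dd (u # w # vs) (joint K) z) (at 0)"
      for z using assms by (intro Cinf_b_has_derivative; auto)+
    show "continuous_on UNIV (dd (w # u # vs) (joint K))" "continuous_on UNIV (dd (u # w # vs) (joint K))"
      using assms by (intro Cinf_b_continuous_on; auto)+
  qed
qed

lemma Cinf_b_dd_move: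
  assumes "set (pre @ a # ws @ suf) \<subseteq> basis_dirs"
  shows "dd (pre @ a # ws @ suf) (joint K) = dd (pre @ ws @ a # suf) (joint K)"
  using assms
proof (induction ws arbitrary: pre)
  case Nil
  then show ?case by simp
next
  case (Cons w ws)
  have "dd (a # w # ws @ suf) (joint K) = dd (w # a # ws @ suf) (joint K)"
    using Cons.prems by (intro Cinf_b_dd_swap) auto
  then have "dd (pre @ a # (w # ws) @ suf) (joint K) = dd ((pre @ [w]) @ a # ws @ suf) (joint K)"
    by (simp add: dd_append)
  also have "\<dots> = dd ((pre @ [w]) @ ws @ a # suf) (joint K)"
    using Cons.IH[of "pre @ [w]"] Cons.prems by simp
  finally show ?case by simp
qed

lemma Cinf_b_dd_append_commute:
  assumes "set (pre @ xs @ ys @ suf) \<subseteq> basis_dirs"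
  shows "dd (pre @ xs @ ys @ suf) (joint K) = dd (pre @ ys @ xs @ suf) (joint K)"
  using assms
proof (induction xs arbitrary: pre)
  case Nil
  then show ?case by simp
next
  case (Cons x xs)
  have "dd (pre @ (x # xs) @ ys @ suf) (joint K) = dd ((pre @ [x]) @ ys @ xs @ suf) (joint K)"
    using Cons.IH[of "pre @ [x]"] Cons.prems by simp
  also have "\<dots> = dd (pre @ ys @ x # xs @ suf) (joint K)"
    using Cinf_b_dd_move[of pre x ys "xs @ suf"] Cons.prems by auto
  finally show ?case by simp
qed

lemma Cinf_b_uniform_bound:
  "\<exists>Bd\<ge>0. \<forall>ws. set ws \<subseteq> basis_dirs \<and> length ws \<le> L \<longrightarrow> (\<forall>z. \<bar>dd ws (joint K) z\<bar> \<le> Bd)"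
proof -
  define W where "W = {ws. set ws \<subseteq> (basis_dirs :: ((real^'d) \<times> (real^'d)) set) \<and> length ws \<le> L}"
  have "finite W" unfolding W_def by (rule finite_lists_length_le[OF finite_basis_dirs])
  then have "bounded (\<Union>ws\<in>W. range (dd ws (joint K)))"
    using Cinf_b_bounded unfolding W_def by blast
  then obtain Bd where Bd: "Bd > 0" "\<forall>r\<in>(\<Union>ws\<in>W. range (dd ws (joint K))). norm r \<le> Bd"
    unfolding bounded_pos by blast
  have "\<bar>dd ws (joint K) z\<bar> \<le> Bd" if "set ws \<subseteq> basis_dirs" "length ws \<le> L" for ws z
    using Bd(2) that unfolding W_def by (metis (mono_tags, lifting) UN_I mem_Collect_eq rangeI real_norm_def)
  then show ?thesis using Bd(1) by (intro exI[of _ Bd]) auto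
qed

end

lemma dd_compose_swap:
  "dd vs (\<lambda>z. f (prod.swap z)) z = dd (map prod.swap vs) f (prod.swap z)"
proof (induction vs arbitrary: z)
  case Nil
  then show ?case by simp
next
  case (Cons v vs)
  have "\<And>t. prod.swap (z + t *\<^sub>R v) = prod.swap z + t *\<^sub>R prod.swap v"
    by (cases z, cases v) simp
  then show ?case using Cons by simp
qed

definition Kab_dirs :: "('d \<Rightarrow> nat) \<Rightarrow> ('d \<Rightarrow> nat) \<Rightarrow> ((real^'d) \<times> (real^'d)) list" where
  "Kab_dirs \<alpha> \<beta> = map (\<lambda>i. (axis i 1, 0)) (coord_list \<alpha>) @ map (\<lambda>i. (0, axis i 1)) (coord_list \<beta>)"

lemma Kab_eq_dd: "Kab K \<alpha> \<beta> x y = dd (Kab_dirs \<alpha> \<beta>) (joint K) (x, y)"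
  unfolding Kab_def Kab_dirs_def by simp

lemma Kab_dirs_subset_basis_dirs: "set (Kab_dirs \<alpha> \<beta>) \<subseteq> basis_dirs"
  unfolding Kab_dirs_def by auto

lemma Kab_symmetric:
  fixes K :: "real^'d \<Rightarrow> real^'d \<Rightarrow> real"
  assumes cov: "covariance_kernel K" and smooth: "Cinf_b K"
  shows "Kab K \<alpha> \<beta> x y = Kab K \<beta> \<alpha> y x"
proof -
  define X where "X a = map (\<lambda>i. (axis i (1::real), 0::real^'d)) (coord_list a)" for a :: "'d \<Rightarrow> nat"
  define Y where "Y a = map (\<lambda>i. (0::real^'d, axis i (1::real))) (coord_list a)" for a :: "'d \<Rightarrow> nat"
  have XY: "set (X a) \<subseteq> basis_dirs" "set (Y a) \<subseteq> basis_dirs" for a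
    unfolding X_def Y_def by auto
  have "joint K = (\<lambda>z. joint K (prod.swap z))"
    using cov unfolding covariance_kernel_def joint_def by auto
  then have "Kab K \<beta> \<alpha> y x = dd (X \<beta> @ Y \<alpha>) (\<lambda>z. joint K (prod.swap z)) (y, x)"
    unfolding Kab_def X_def Y_def by simp
  also have "\<dots> = dd (Y \<beta> @ X \<alpha>) (joint K) (x, y)"
    by (simp add: dd_compose_swap X_def Y_def comp_def)
  also have "\<dots> = dd (X \<alpha> @ Y \<beta>) (joint K) (x, y)"
    using Cinf_b_dd_append_commute[OF smooth, of "[]" "Y \<beta>" "X \<alpha>" "[]"] XY by simp
  also have "\<dots> = Kab K \<alpha> \<beta> x y"
    unfolding Kab_def X_def Y_def by simp
  finally show ?thesis ..
qed

context
  fixes K :: "real^'d \<Rightarrow> real^'d \<Rightarrow> real"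
  assumes smooth: "Cinf_b K"
begin

lemma Kab_measurable: "(\<lambda>(x, y). Kab K \<alpha> \<beta> x y) \<in> borel_measurable (lborel \<Otimes>\<^sub>M lborel)"
proof -
  have "(\<lambda>(x, y). Kab K \<alpha> \<beta> x y) = dd (Kab_dirs \<alpha> \<beta>) (joint K)"
    by (auto simp: Kab_eq_dd)
  then show ?thesis
    unfolding lborel_prod measurable_lborel2
    using Cinf_b_continuous_on[OF smooth Kab_dirs_subset_basis_dirs]
    by (simp add: borel_measurable_continuous_onI)
qed

lemma Kab_measurable_snd: "(\<lambda>y. Kab K \<alpha> \<beta> x y) \<in> borel_measurable lborel"
proof -
  have "continuous_on UNIV (\<lambda>y. dd (Kab_dirs \<alpha> \<beta>) (joint K) (x, y))"
    by (rule continuous_on_compose2[OF Cinf_b_continuous_on[OF smooth Kab_dirs_subset_basis_dirs]])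
      (auto intro!: continuous_intros)
  then show ?thesis unfolding Kab_eq_dd measurable_lborel2 by (rule borel_measurable_continuous_onI)
qed

lemma Kab_bounded: "\<exists>C. \<forall>x y. \<bar>Kab K \<alpha> \<beta> x y\<bar> \<le> C"
proof -
  have "bounded (range (dd (Kab_dirs \<alpha> \<beta>) (joint K)))"
    by (rule Cinf_b_bounded[OF smooth Kab_dirs_subset_basis_dirs])
  then obtain C where "\<forall>z\<in>range (dd (Kab_dirs \<alpha> \<beta>) (joint K)). norm z \<le> C"
    unfolding bounded_iff by blast
  then show ?thesis unfolding Kab_eq_dd by auto
qed

end

section \<open>Taylor expansion in the second variable\<close>

lemma divide_fact_le_self: "0 \<le> (a::real) \<Longrightarrow> a / fact n \<le> a"
  using divide_left_mono[of 1 "fact n" a] by simp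

lemma abs_power_div_fact_le_1:
  fixes x :: real
  assumes "\<bar>x\<bar> \<le> 1"
  shows "\<bar>x ^ j / fact j\<bar> \<le> 1"
proof -
  have "\<bar>x ^ j / fact j\<bar> = \<bar>x\<bar> ^ j / fact j" by (simp add: power_abs)
  also have "\<dots> \<le> \<bar>x\<bar> ^ j" by (rule divide_fact_le_self) simp
  also have "\<dots> \<le> 1" using assms by (simp add: power_le_one)
  finally show ?thesis .
qed

lemma Taylor_remainder_le:
  fixes f :: "nat \<Rightarrow> real \<Rightarrow> real"
  assumes deriv: "\<And>m t. (f m has_real_derivative f (Suc m) t) (at t)"
    and bound: "\<And>t. \<bar>f (Suc l) t\<bar> \<le> B" and X: "\<bar>X\<bar> \<le> h"
  shows "\<bar>f 0 X - (\<Sum>j\<le>l. f j 0 * X ^ j / fact j)\<bar> \<le> B * h ^ Suc l"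
proof -
  have B0: "0 \<le> B" using bound[of 0] by (meson abs_ge_zero order_trans)
  obtain t where "f 0 X = (\<Sum>j<Suc l. f j 0 / fact j * X ^ j) + f (Suc l) t / fact (Suc l) * X ^ Suc l"
    using Maclaurin_bi_le[of f "f 0" "Suc l" X] deriv by blast
  then have "\<bar>f 0 X - (\<Sum>j\<le>l. f j 0 * X ^ j / fact j)\<bar> = \<bar>f (Suc l) t\<bar> * (\<bar>X\<bar> ^ Suc l / fact (Suc l))"
    by (simp add: lessThan_Suc_atMost abs_mult power_abs)
  also have "\<dots> \<le> B * h ^ Suc l"
  proof (rule mult_mono)
    have "\<bar>X\<bar> ^ Suc l / fact (Suc l) \<le> \<bar>X\<bar> ^ Suc l" by (rule divide_fact_le_self) simp
    also have "\<dots> \<le> h ^ Suc l" using X by (intro power_mono) auto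
    finally show "\<bar>X\<bar> ^ Suc l / fact (Suc l) \<le> h ^ Suc l" .
  qed (use bound B0 in auto)
  finally show ?thesis .
qed

definition vec_upd :: "real^'d \<Rightarrow> 'd \<Rightarrow> real \<Rightarrow> real^'d" where
  "vec_upd y i v = (\<chi> k. if k = i then v else y $ k)"

lemma vec_upd_nth [simp]: "vec_upd y i v $ k = (if k = i then v else y $ k)"
  unfolding vec_upd_def by simp

text \<open>
  The tensor-product Taylor polynomial of \<open>y \<mapsto> dd vs (joint K) (x, y)\<close> around \<open>c\<close>, of order
  \<open>l\<close> in each coordinate listed in \<open>is\<close>; the other coordinates of \<open>y\<close> are ignored.
\<close>

fun taylor_poly :: "(real^'d \<Rightarrow> real^'d \<Rightarrow> real) \<Rightarrow> nat \<Rightarrow> 'd list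
    \<Rightarrow> ((real^'d) \<times> (real^'d)) list \<Rightarrow> real^'d \<Rightarrow> real^'d \<Rightarrow> real^'d \<Rightarrow> real" where
  "taylor_poly K l [] vs c x y = dd vs (joint K) (x, c)"
| "taylor_poly K l (i # is) vs c x y = (\<Sum>j\<le>l.
      taylor_poly K l is (replicate j (0, axis i 1) @ vs) c x (vec_upd y i (c $ i))
      * (y $ i - c $ i) ^ j / fact j)"

lemma sum_Taylor_terms_abs_le:
  fixes D :: "nat \<Rightarrow> real"
  assumes D: "\<And>j. j \<le> l \<Longrightarrow> \<bar>D j\<bar> \<le> E" and X: "\<bar>X\<bar> \<le> 1"
  shows "\<bar>\<Sum>j\<le>l. D j * (X ^ j / fact j)\<bar> \<le> real (l+1) * E"
proof -
  have "\<bar>D j * (X ^ j / fact j)\<bar> \<le> E" if "j \<in> {..l}" for j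
  proof -
    have "\<bar>D j\<bar> * \<bar>X ^ j / fact j\<bar> \<le> E * 1"
      using D[of j] that X abs_power_div_fact_le_1[of X j] by (intro mult_mono) auto
    then show ?thesis by (simp only: abs_mult mult_1_right)
  qed
  then have "\<bar>\<Sum>j\<le>l. D j * (X ^ j / fact j)\<bar> \<le> (\<Sum>j\<le>l. E)"
    by (intro order_trans[OF sum_abs] sum_mono)
  then show ?thesis by simp
qed

lemma dd_Taylor_along_line:
  fixes K :: "real^'d \<Rightarrow> real^'d \<Rightarrow> real"
  assumes smooth: "Cinf_b K"
    and Bd: "\<forall>ws. set ws \<subseteq> basis_dirs \<and> length ws \<le> L \<longrightarrow> (\<forall>z. \<bar>dd ws (joint K) z\<bar> \<le> Bd)"
    and vs: "set vs \<subseteq> basis_dirs" "Suc l + length vs \<le> L" and e: "e \<in> basis_dirs" and X: "\<bar>X\<bar> \<le> h"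
  shows "\<bar>dd vs (joint K) (z + X *\<^sub>R e) - (\<Sum>j\<le>l. dd (replicate j e @ vs) (joint K) z * X ^ j / fact j)\<bar>
    \<le> Bd * h ^ Suc l"
proof -
  have sets: "set (replicate m e @ vs) \<subseteq> basis_dirs" for m using vs e by auto
  have "\<bar>dd (replicate 0 e @ vs) (joint K) (z + X *\<^sub>R e)
      - (\<Sum>j\<le>l. dd (replicate j e @ vs) (joint K) (z + 0 *\<^sub>R e) * X ^ j / fact j)\<bar> \<le> Bd * h ^ Suc l"
  proof (rule Taylor_remainder_le[where f="\<lambda>m s. dd (replicate m e @ vs) (joint K) (z + s *\<^sub>R e)"])
    show "((\<lambda>s. dd (replicate m e @ vs) (joint K) (z + s *\<^sub>R e)) has_real_derivative
        dd (replicate (Suc m) e @ vs) (joint K) (z + t *\<^sub>R e)) (at t)" for m t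
      using Cinf_b_has_derivative_at[OF smooth sets e] by simp
    have "set (replicate (Suc l) e @ vs) \<subseteq> basis_dirs \<and> length (replicate (Suc l) e @ vs) \<le> L"
      using vs e by auto
    then show "\<bar>dd (replicate (Suc l) e @ vs) (joint K) (z + t *\<^sub>R e)\<bar> \<le> Bd" for t
      using Bd by blast
  qed (rule X)
  then show ?thesis by simp
qed

lemma taylor_poly_error:
  fixes K :: "real^'d \<Rightarrow> real^'d \<Rightarrow> real"
  assumes smooth: "Cinf_b K"
    and Bd: "\<forall>ws. set ws \<subseteq> basis_dirs \<and> length ws \<le> L \<longrightarrow> (\<forall>z. \<bar>dd ws (joint K) z\<bar> \<le> Bd)"
    and h: "h \<le> 1"
    and "distinct is" "set vs \<subseteq> basis_dirs" "length vs + (l+1) * length is \<le> L"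
    and "\<forall>k. k \<notin> set is \<longrightarrow> y $ k = c $ k" "\<forall>k. \<bar>y $ k - c $ k\<bar> \<le> h"
  shows "\<bar>dd vs (joint K) (x, y) - taylor_poly K l is vs c x y\<bar> \<le> Bd * h ^ (l+1) * (l+2) ^ length is"
  using assms(4-)
proof (induction "is" arbitrary: vs y)
  case Nil
  then have "y = c" by (simp add: vec_eq_iff)
  moreover have "0 \<le> Bd" using Bd[rule_format, of "[]" 0] by simp
  moreover have "0 \<le> h" using Nil.prems(5) by (meson abs_ge_zero order_trans)
  ultimately show ?case by simp
next
  case (Cons i "is")
  define e :: "(real^'d) \<times> (real^'d)" where "e = (0, axis i 1)"
  define y0 where "y0 = vec_upd y i (c $ i)"
  define X where "X = y $ i - c $ i"
  define vsj where "vsj j = replicate j e @ vs" for j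
  define E where "E = Bd * h ^ (l+1) * (l+2) ^ length is"
  have vsj: "set (vsj j) \<subseteq> basis_dirs" "length (vsj j) = j + length vs" for j
    using Cons.prems unfolding vsj_def e_def by auto
  have X: "\<bar>X\<bar> \<le> h" using Cons.prems(5) unfolding X_def by blast
  have "(x, y) = (x, y0) + X *\<^sub>R e"
    unfolding e_def y0_def X_def by (simp add: vec_eq_iff axis_def)
  then have taylor: "\<bar>dd vs (joint K) (x, y) - (\<Sum>j\<le>l. dd (vsj j) (joint K) (x, y0) * X ^ j / fact j)\<bar>
      \<le> Bd * h ^ (l+1)"
    using dd_Taylor_along_line[OF smooth Bd, of vs l e X h "(x, y0)"] Cons.prems(2,3) X
    by (simp add: vsj_def e_def)
  have "\<bar>dd (vsj j) (joint K) (x, y0) - taylor_poly K l is (vsj j) c x y0\<bar> \<le> E" if "j \<le> l" for j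
    unfolding E_def by (rule Cons.IH) (use Cons.prems that vsj h in \<open>auto simp: y0_def\<close>)
  then have rest: "\<bar>\<Sum>j\<le>l. (dd (vsj j) (joint K) (x, y0) - taylor_poly K l is (vsj j) c x y0)
      * (X ^ j / fact j)\<bar> \<le> real (l+1) * E"
    using X h
    by (intro sum_Taylor_terms_abs_le) auto
  have "taylor_poly K l (i # is) vs c x y
      = (\<Sum>j\<le>l. dd (vsj j) (joint K) (x, y0) * X ^ j / fact j)
        - (\<Sum>j\<le>l. (dd (vsj j) (joint K) (x, y0) - taylor_poly K l is (vsj j) c x y0) * (X ^ j / fact j))"
    unfolding vsj_def e_def y0_def X_def by (simp add: sum_subtractf algebra_simps)
  then have "\<bar>dd vs (joint K) (x, y) - taylor_poly K l (i # is) vs c x y\<bar> \<le> Bd * h ^ (l+1) + (l+1) * E"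
    using taylor rest by linarith
  also have "\<dots> \<le> Bd * h ^ (l+1) * (l+2) ^ length (i # is)"
  proof -
    have "0 \<le> Bd * h ^ (l+1)"
      using Bd[rule_format, of "[]" 0] X by (simp add: order_trans[OF abs_ge_zero])
    then have "Bd * h ^ (l+1) * 1 \<le> Bd * h ^ (l+1) * (l+2) ^ length is"
      by (intro mult_left_mono) auto
    then show ?thesis unfolding E_def by (simp add: algebra_simps)
  qed
  finally show ?case .
qed

fun monomial :: "'d list \<Rightarrow> real^'d \<Rightarrow> nat list \<Rightarrow> real^'d \<Rightarrow> real" where
  "monomial [] c p y = 1"
| "monomial (i # is) c p y = (y $ i - c $ i) ^ (hd p) / fact (hd p) * monomial is c (tl p) y"

fun taylor_coeff :: "(real^'d \<Rightarrow> real^'d \<Rightarrow> real) \<Rightarrow> 'd list \<Rightarrow> ((real^'d) \<times> (real^'d)) list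
    \<Rightarrow> real^'d \<Rightarrow> nat list \<Rightarrow> real^'d \<Rightarrow> real" where
  "taylor_coeff K [] vs c p x = dd vs (joint K) (x, c)"
| "taylor_coeff K (i # is) vs c p x = taylor_coeff K is (replicate (hd p) (0, axis i 1) @ vs) c (tl p) x"

definition exponent_lists :: "nat \<Rightarrow> nat \<Rightarrow> nat list set" where
  "exponent_lists l n = {p. set p \<subseteq> {..l} \<and> length p = n}"

lemma finite_exponent_lists: "finite (exponent_lists l n)"
  unfolding exponent_lists_def by (rule finite_lists_length_eq) simp

lemma card_exponent_lists: "card (exponent_lists l n) = (l+1) ^ n"
  unfolding exponent_lists_def by (simp add: card_lists_length_eq)

lemma exponent_lists_Suc:
  "exponent_lists l (Suc n) = (\<lambda>(j, p). j # p) ` ({..l} \<times> exponent_lists l n)"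
proof
  show "exponent_lists l (Suc n) \<subseteq> (\<lambda>(j, p). j # p) ` ({..l} \<times> exponent_lists l n)"
  proof
    fix p assume "p \<in> exponent_lists l (Suc n)"
    then obtain j q where "p = j # q" "j \<le> l" "q \<in> exponent_lists l n"
      unfolding exponent_lists_def by (cases p) auto
    then show "p \<in> (\<lambda>(j, p). j # p) ` ({..l} \<times> exponent_lists l n)" by force
  qed
qed (auto simp: exponent_lists_def)

lemma sum_exponent_lists_Suc:
  "(\<Sum>p\<in>exponent_lists l (Suc n). f p) = (\<Sum>j\<le>l. \<Sum>q\<in>exponent_lists l n. f (j # q))"
proof -
  have "inj_on (\<lambda>(j, p). j # p) ({..l} \<times> exponent_lists l n)" by (auto simp: inj_on_def)
  then have "(\<Sum>p\<in>exponent_lists l (Suc n). f p) = (\<Sum>x\<in>{..l} \<times> exponent_lists l n. f ((\<lambda>(j, p). j # p) x))"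
    unfolding exponent_lists_Suc by (rule sum.reindex[unfolded comp_def])
  also have "\<dots> = (\<Sum>j\<le>l. \<Sum>q\<in>exponent_lists l n. f (j # q))"
    by (subst sum.cartesian_product) (simp add: case_prod_beta)
  finally show ?thesis .
qed

lemma monomial_vec_upd: "i \<notin> set is \<Longrightarrow> monomial is c p (vec_upd y i v) = monomial is c p y"
  by (induction "is" arbitrary: p) auto

lemma taylor_poly_expand:
  "distinct is \<Longrightarrow> taylor_poly K l is vs c x y =
     (\<Sum>p\<in>exponent_lists l (length is). taylor_coeff K is vs c p x * monomial is c p y)"
proof (induction "is" arbitrary: vs y)
  case Nil
  have "exponent_lists l 0 = {[]}" unfolding exponent_lists_def by auto
  then show ?case by simp
next
  case (Cons i "is")
  have "taylor_poly K l (i # is) vs c x y = (\<Sum>j\<le>l. (\<Sum>q\<in>exponent_lists l (length is).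
      taylor_coeff K is (replicate j (0, axis i 1) @ vs) c q x * monomial is c q (vec_upd y i (c $ i)))
      * ((y $ i - c $ i) ^ j / fact j))"
    using Cons by simp
  also have "\<dots> = (\<Sum>j\<le>l. \<Sum>q\<in>exponent_lists l (length is).
      taylor_coeff K (i # is) vs c (j # q) x * monomial (i # is) c (j # q) y)"
    using Cons.prems unfolding sum_distrib_right by (intro sum.cong refl) (simp add: monomial_vec_upd)
  also have "\<dots> = (\<Sum>p\<in>exponent_lists l (length (i # is)). taylor_coeff K (i # is) vs c p x * monomial (i # is) c p y)"
    by (simp add: sum_exponent_lists_Suc)
  finally show ?case .
qed

lemma monomial_abs_le_1: "\<forall>k. \<bar>y $ k - c $ k\<bar> \<le> 1 \<Longrightarrow> \<bar>monomial is c p y\<bar> \<le> 1"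
proof (induction "is" arbitrary: p)
  case (Cons i "is")
  have a: "\<bar>(y $ i - c $ i) ^ hd p / fact (hd p)\<bar> \<le> 1"
    using Cons.prems by (intro abs_power_div_fact_le_1) blast
  have b: "\<bar>monomial is c (tl p) y\<bar> \<le> 1" using Cons by blast
  show ?case using mult_mono[OF a b] by (simp add: abs_mult)
qed simp

lemma continuous_on_monomial: "continuous_on UNIV (monomial is c p)"
  by (induction "is" arbitrary: p) (auto intro!: continuous_intros)

section \<open>Square-integrable functions vanishing outside a set\<close>

definition L2_on :: "(real^'d) set \<Rightarrow> (real^'d \<Rightarrow> real) \<Rightarrow> bool" where
  "L2_on B u \<longleftrightarrow> u \<in> borel_measurable lborel \<and> integrable lborel (\<lambda>y. (u y)\<^sup>2) \<and> (\<forall>y. y \<notin> B \<longrightarrow> u y = 0)"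

lemma abs_le_1_plus_square: "\<bar>x::real\<bar> \<le> 1 + x\<^sup>2"
proof (cases "\<bar>x\<bar> \<le> 1")
  case False
  then have "\<bar>x\<bar> * 1 \<le> \<bar>x\<bar> * \<bar>x\<bar>" by (intro mult_left_mono) auto
  then show ?thesis by (simp add: power2_eq_square)
qed (use zero_le_power2[of x] in linarith)

lemma abs_mult_le_sum_squares: "\<bar>x * y::real\<bar> \<le> x\<^sup>2 + y\<^sup>2"
proof -
  have "2 * \<bar>x\<bar> * \<bar>y\<bar> \<le> x\<^sup>2 + y\<^sup>2" using sum_squares_bound[of "\<bar>x\<bar>" "\<bar>y\<bar>"] by simp
  moreover have "0 \<le> \<bar>x\<bar> * \<bar>y\<bar>" by simp
  ultimately show ?thesis unfolding abs_mult by linarith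
qed

context
  fixes B :: "(real^'d) set"
  assumes B_sets: "B \<in> sets lborel" and B_finite: "emeasure lborel B < \<infinity>"
begin

lemma L2_on_integrable:
  assumes "L2_on B u"
  shows "integrable lborel u"
proof (rule Bochner_Integration.integrable_bound[where f="\<lambda>y. indicator B y + (u y)\<^sup>2 :: real"])
  show "integrable lborel (\<lambda>y. indicator B y + (u y)\<^sup>2 :: real)"
    using assms B_sets B_finite unfolding L2_on_def
    by (intro Bochner_Integration.integrable_add integrable_real_indicator) auto
  show "u \<in> borel_measurable lborel" using assms unfolding L2_on_def by auto
  show "AE y in lborel. norm (u y) \<le> norm (indicator B y + (u y)\<^sup>2 :: real)"
    using assms abs_le_1_plus_square unfolding L2_on_def by (intro AE_I2) (auto simp: indicator_def)
qed

lemma L2_on_abs_integrable: "L2_on B u \<Longrightarrow> integrable lborel (\<lambda>y. \<bar>u y\<bar>)"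
  using L2_on_integrable by simp

lemma L2_on_mult_integrable:
  assumes "L2_on B u" "L2_on B v"
  shows "integrable lborel (\<lambda>y. u y * v y)"
proof (rule Bochner_Integration.integrable_bound[where f="\<lambda>y. (u y)\<^sup>2 + (v y)\<^sup>2 :: real"])
  show "integrable lborel (\<lambda>y. (u y)\<^sup>2 + (v y)\<^sup>2)"
    using assms unfolding L2_on_def by auto
  show "(\<lambda>y. u y * v y) \<in> borel_measurable lborel" using assms unfolding L2_on_def by auto
  show "AE y in lborel. norm (u y * v y) \<le> norm ((u y)\<^sup>2 + (v y)\<^sup>2)"
    using abs_mult_le_sum_squares by (intro AE_I2) auto
qed

lemma L2_on_bounded_mult_integrable:
  assumes "L2_on B u" "b \<in> borel_measurable lborel" "\<And>y. y \<in> B \<Longrightarrow> \<bar>b y\<bar> \<le> C"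
  shows "integrable lborel (\<lambda>y. b y * u y)"
proof (rule Bochner_Integration.integrable_bound[where f="\<lambda>y. \<bar>C\<bar> * \<bar>u y\<bar> :: real"])
  show "integrable lborel (\<lambda>y. \<bar>C\<bar> * \<bar>u y\<bar>)" using L2_on_abs_integrable[OF assms(1)] by simp
  show "(\<lambda>y. b y * u y) \<in> borel_measurable lborel" using assms unfolding L2_on_def by auto
  have "\<bar>b y\<bar> * \<bar>u y\<bar> \<le> \<bar>C\<bar> * \<bar>u y\<bar>" for y
  proof (cases "y \<in> B")
    case True
    then have "\<bar>b y\<bar> \<le> \<bar>C\<bar>" using assms(3)[of y] by linarith
    then show ?thesis by (intro mult_right_mono) auto
  qed (use assms(1) in \<open>simp add: L2_on_def\<close>)
  then show "AE y in lborel. norm (b y * u y) \<le> norm (\<bar>C\<bar> * \<bar>u y\<bar>)"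
    by (simp add: abs_mult)
qed

lemma L2_on_sum:
  assumes "finite I" "\<And>i. i \<in> I \<Longrightarrow> L2_on B (u i)"
  shows "L2_on B (\<lambda>y. \<Sum>i\<in>I. c i * u i y)"
  unfolding L2_on_def
proof (intro conjI)
  show "(\<lambda>y. \<Sum>i\<in>I. c i * u i y) \<in> borel_measurable lborel"
    using assms unfolding L2_on_def by (intro borel_measurable_sum borel_measurable_times) auto
  have "(\<lambda>y. (\<Sum>i\<in>I. c i * u i y)\<^sup>2) = (\<lambda>y. \<Sum>i\<in>I. \<Sum>j\<in>I. c i * c j * (u i y * u j y))"
    by (auto simp: power2_eq_square sum_product algebra_simps)
  moreover have "integrable lborel (\<lambda>y. \<Sum>i\<in>I. \<Sum>j\<in>I. c i * c j * (u i y * u j y))"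
    using assms by (intro Bochner_Integration.integrable_sum Bochner_Integration.integrable_mult_right
        L2_on_mult_integrable) auto
  ultimately show "integrable lborel (\<lambda>y. (\<Sum>i\<in>I. c i * u i y)\<^sup>2)" by simp
  show "\<forall>y. y \<notin> B \<longrightarrow> (\<Sum>i\<in>I. c i * u i y) = 0" using assms unfolding L2_on_def by auto
qed

lemma L2_on_L1_norm_squared_le:
  assumes pos: "measure lborel B > 0" and u: "L2_on B u"
  shows "(\<integral>y. \<bar>u y\<bar> \<partial>lborel)\<^sup>2 \<le> measure lborel B * (\<integral>y. (u y)\<^sup>2 \<partial>lborel)"
proof -
  define P where "P = (\<integral>y. \<bar>u y\<bar> \<partial>lborel)"
  define Q where "Q = (\<integral>y. (u y)\<^sup>2 \<partial>lborel)"
  define V where "V = measure lborel B"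
  have "0 \<le> Q - 2 * a * P + a\<^sup>2 * V" for a
  proof -
    have "(\<lambda>y. (\<bar>u y\<bar> - a * indicator B y)\<^sup>2) = (\<lambda>y. (u y)\<^sup>2 - 2 * a * \<bar>u y\<bar> + a\<^sup>2 * indicator B y)"
      using u unfolding L2_on_def by (force simp: power2_eq_square algebra_simps indicator_def)
    moreover have "(\<integral>y. (u y)\<^sup>2 - 2 * a * \<bar>u y\<bar> + a\<^sup>2 * indicator B y \<partial>lborel) = Q - 2 * a * P + a\<^sup>2 * V"
      using L2_on_abs_integrable[OF u] u B_sets B_finite unfolding P_def Q_def V_def L2_on_def
      by (simp add: Bochner_Integration.integral_add Bochner_Integration.integral_diff)
    ultimately show ?thesis
      using integral_nonneg_AE[of "\<lambda>y. (\<bar>u y\<bar> - a * indicator B y)\<^sup>2" lborel] by simp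
  qed
  from this[of "P / V"] have "P\<^sup>2 / V \<le> Q"
    using pos by (simp add: V_def power2_eq_square field_simps)
  then show ?thesis using pos unfolding P_def Q_def V_def by (simp add: divide_le_eq mult.commute)
qed

lemma L2_on_abs_tensor_integrable:
  assumes u: "L2_on B u" and v: "L2_on B v"
  shows "integrable (lborel \<Otimes>\<^sub>M lborel) (\<lambda>(x, y). \<bar>v x\<bar> * \<bar>u y\<bar>)"
proof -
  have [measurable]: "u \<in> borel_measurable lborel" "v \<in> borel_measurable lborel"
    using u v unfolding L2_on_def by auto
  show ?thesis
  proof (rule lborel_pair.Fubini_integrable)
    show "(\<lambda>(x, y). \<bar>v x\<bar> * \<bar>u y\<bar>) \<in> borel_measurable (lborel \<Otimes>\<^sub>M lborel)"
      by measurable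
    have "(\<lambda>x. \<integral>y. norm (case (x, y) of (x, y) \<Rightarrow> \<bar>v x\<bar> * \<bar>u y\<bar>) \<partial>lborel)
        = (\<lambda>x. \<bar>v x\<bar> * (\<integral>y. \<bar>u y\<bar> \<partial>lborel))"
      by (simp add: abs_mult)
    then show "integrable lborel (\<lambda>x. \<integral>y. norm (case (x, y) of (x, y) \<Rightarrow> \<bar>v x\<bar> * \<bar>u y\<bar>) \<partial>lborel)"
      using L2_on_abs_integrable[OF v] by simp
    show "AE x in lborel. integrable lborel (\<lambda>y. case (x, y) of (x, y) \<Rightarrow> \<bar>v x\<bar> * \<bar>u y\<bar>)"
      using L2_on_abs_integrable[OF u] by simp
  qed
qed

lemma Fubini_bounded_kernel:
  fixes k :: "real^'d \<Rightarrow> real^'d \<Rightarrow> real"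
  assumes k_measurable [measurable]: "(\<lambda>(x, y). k x y) \<in> borel_measurable (lborel \<Otimes>\<^sub>M lborel)"
    and k_bounded: "\<And>x y. \<bar>k x y\<bar> \<le> C"
    and u: "L2_on B u" and v: "L2_on B v"
  shows "(\<integral>x. (\<integral>y. k x y * u y \<partial>lborel) * v x \<partial>lborel) = (\<integral>y. u y * (\<integral>x. k x y * v x \<partial>lborel) \<partial>lborel)"
proof -
  have [measurable]: "u \<in> borel_measurable lborel" "v \<in> borel_measurable lborel"
    using u v unfolding L2_on_def by auto
  define H where "H x y = v x * (k x y * u y)" for x y
  have "integrable (lborel \<Otimes>\<^sub>M lborel) (\<lambda>(x, y). \<bar>v x\<bar> * \<bar>u y\<bar>)"
    by (rule L2_on_abs_tensor_integrable[OF u v])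
  then have "integrable (lborel \<Otimes>\<^sub>M lborel) (\<lambda>z. \<bar>C\<bar> * (\<lambda>(x, y). \<bar>v x\<bar> * \<bar>u y\<bar>) z)"
    by (rule Bochner_Integration.integrable_mult_right)
  then have "integrable (lborel \<Otimes>\<^sub>M lborel) (\<lambda>(x, y). \<bar>C\<bar> * (\<bar>v x\<bar> * \<bar>u y\<bar>))"
    by (simp add: case_prod_beta')
  then have "integrable (lborel \<Otimes>\<^sub>M lborel) (\<lambda>(x, y). H x y)"
  proof (rule Bochner_Integration.integrable_bound)
    show "(\<lambda>(x, y). H x y) \<in> borel_measurable (lborel \<Otimes>\<^sub>M lborel)" unfolding H_def by measurable
    have "\<bar>k x y\<bar> * (\<bar>v x\<bar> * \<bar>u y\<bar>) \<le> \<bar>C\<bar> * (\<bar>v x\<bar> * \<bar>u y\<bar>)" for x y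
      using k_bounded[of x y] by (intro mult_right_mono) auto
    then show "AE z in lborel \<Otimes>\<^sub>M lborel.
        norm (case z of (x, y) \<Rightarrow> H x y) \<le> norm (case z of (x, y) \<Rightarrow> \<bar>C\<bar> * (\<bar>v x\<bar> * \<bar>u y\<bar>))"
      by (intro AE_I2) (auto simp: H_def abs_mult mult_ac)
  qed
  from lborel_pair.Fubini_integral[OF this]
  have "(\<integral>y. (\<integral>x. H x y \<partial>lborel) \<partial>lborel) = (\<integral>x. (\<integral>y. H x y \<partial>lborel) \<partial>lborel)" .
  moreover have "(\<integral>y. H x y \<partial>lborel) = (\<integral>y. k x y * u y \<partial>lborel) * v x" for x
    unfolding H_def by (simp add: mult.commute)
  moreover have "(\<integral>x. H x y \<partial>lborel) = u y * (\<integral>x. k x y * v x \<partial>lborel)" for y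
  proof -
    have "(\<integral>x. H x y \<partial>lborel) = (\<integral>x. u y * (k x y * v x) \<partial>lborel)"
      unfolding H_def by (simp add: algebra_simps)
    then show ?thesis by simp
  qed
  ultimately show ?thesis by simp
qed

end

section \<open>Quadratic forms of the kernel operator\<close>

lemma integral_sum_products:
  fixes u v :: "nat \<Rightarrow> 'b \<Rightarrow> 'a \<Rightarrow> real"
  assumes "\<And>i j \<alpha>. i < k \<Longrightarrow> j < k \<Longrightarrow> \<alpha> \<in> A \<Longrightarrow> integrable M (\<lambda>x. u i \<alpha> x * v j \<alpha> x)"
  shows "(\<Sum>\<alpha>\<in>A. \<integral>x. (\<Sum>i<k. p i * u i \<alpha> x) * (\<Sum>j<k. q j * v j \<alpha> x) \<partial>M)
    = (\<Sum>i<k. \<Sum>j<k. p i * q j * (\<Sum>\<alpha>\<in>A. \<integral>x. u i \<alpha> x * v j \<alpha> x \<partial>M))"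
proof -
  have "(\<integral>x. (\<Sum>i<k. p i * u i \<alpha> x) * (\<Sum>j<k. q j * v j \<alpha> x) \<partial>M)
      = (\<Sum>i<k. \<Sum>j<k. p i * q j * (\<integral>x. u i \<alpha> x * v j \<alpha> x \<partial>M))" if \<alpha>: "\<alpha> \<in> A" for \<alpha>
  proof -
    have "(\<lambda>x. (\<Sum>i<k. p i * u i \<alpha> x) * (\<Sum>j<k. q j * v j \<alpha> x))
        = (\<lambda>x. \<Sum>i<k. \<Sum>j<k. p i * q j * (u i \<alpha> x * v j \<alpha> x))"
      by (auto simp: sum_product mult_ac)
    moreover have "(\<integral>x. (\<Sum>i<k. \<Sum>j<k. p i * q j * (u i \<alpha> x * v j \<alpha> x)) \<partial>M)
        = (\<Sum>i<k. \<integral>x. (\<Sum>j<k. p i * q j * (u i \<alpha> x * v j \<alpha> x)) \<partial>M)"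
      using assms \<alpha> by (intro Bochner_Integration.integral_sum Bochner_Integration.integrable_sum
          Bochner_Integration.integrable_mult_right) auto
    moreover have "(\<integral>x. (\<Sum>j<k. p i * q j * (u i \<alpha> x * v j \<alpha> x)) \<partial>M)
        = (\<Sum>j<k. p i * q j * (\<integral>x. u i \<alpha> x * v j \<alpha> x \<partial>M))" if "i < k" for i
      using assms \<alpha> that by (subst Bochner_Integration.integral_sum) auto
    ultimately show ?thesis by simp
  qed
  then have "(\<Sum>\<alpha>\<in>A. \<integral>x. (\<Sum>i<k. p i * u i \<alpha> x) * (\<Sum>j<k. q j * v j \<alpha> x) \<partial>M)
      = (\<Sum>\<alpha>\<in>A. \<Sum>i<k. \<Sum>j<k. p i * q j * (\<integral>x. u i \<alpha> x * v j \<alpha> x \<partial>M))"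
    by (rule sum.cong[OF refl])
  also have "\<dots> = (\<Sum>i<k. \<Sum>j<k. \<Sum>\<alpha>\<in>A. p i * q j * (\<integral>x. u i \<alpha> x * v j \<alpha> x \<partial>M))"
    by (subst sum.swap) (intro sum.cong refl sum.swap)
  finally show ?thesis by (simp add: sum_distrib_left)
qed

text \<open>
  Grouping the indices by the value of \<open>\<mu>\<close> splits the form into blocks, each positive
  semidefinite and weighted by \<open>\<mu> - t \<ge> 0\<close>.
\<close>

lemma quadratic_form_eigen_lower_bound:
  fixes G :: "nat \<Rightarrow> nat \<Rightarrow> real" and \<mu> c :: "nat \<Rightarrow> real"
  assumes psd: "\<And>p. 0 \<le> (\<Sum>i<k. \<Sum>j<k. p i * p j * G i j)"
    and block: "\<And>i j. i < k \<Longrightarrow> j < k \<Longrightarrow> \<mu> i \<noteq> \<mu> j \<Longrightarrow> G i j = 0"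
    and above: "\<And>i. i < k \<Longrightarrow> t \<le> \<mu> i"
  shows "t * (\<Sum>i<k. \<Sum>j<k. c i * c j * G i j) \<le> (\<Sum>i<k. \<Sum>j<k. c i * \<mu> i * c j * G i j)"
proof -
  define W where "W = \<mu> ` {..<k}"
  define cl where "cl = (\<lambda>lam i. if \<mu> i = lam then c i else 0)"
  have "(\<Sum>lam\<in>W. (lam - t) * (\<Sum>i<k. \<Sum>j<k. cl lam i * cl lam j * G i j))
      = (\<Sum>i<k. \<Sum>j<k. \<Sum>lam\<in>W. (lam - t) * (cl lam i * cl lam j * G i j))"
    by (simp add: sum_distrib_left) (subst sum.swap, intro sum.cong refl sum.swap)
  also have "\<dots> = (\<Sum>i<k. \<Sum>j<k. c i * c j * (\<mu> i - t) * G i j)"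
  proof (intro sum.cong refl)
    fix i j assume i: "i \<in> {..<k}" and j: "j \<in> {..<k}"
    have "(\<Sum>lam\<in>W. (lam - t) * (cl lam i * cl lam j * G i j))
        = (\<Sum>lam\<in>W. if \<mu> i = lam then (\<mu> i - t) * (c i * (if \<mu> j = \<mu> i then c j else 0) * G i j) else 0)"
      by (intro sum.cong refl) (auto simp: cl_def)
    also have "\<dots> = (\<mu> i - t) * (c i * (if \<mu> j = \<mu> i then c j else 0) * G i j)"
      using i unfolding W_def by (subst sum.delta') auto
    also have "\<dots> = c i * c j * (\<mu> i - t) * G i j"
      using block[of i j] i j by auto
    finally show "(\<Sum>lam\<in>W. (lam - t) * (cl lam i * cl lam j * G i j)) = c i * c j * (\<mu> i - t) * G i j" .
  qed
  finally have "(\<Sum>i<k. \<Sum>j<k. c i * c j * (\<mu> i - t) * G i j)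
      = (\<Sum>lam\<in>W. (lam - t) * (\<Sum>i<k. \<Sum>j<k. cl lam i * cl lam j * G i j))" ..
  moreover have "0 \<le> (\<Sum>lam\<in>W. (lam - t) * (\<Sum>i<k. \<Sum>j<k. cl lam i * cl lam j * G i j))"
  proof (rule sum_nonneg)
    fix lam assume "lam \<in> W"
    then have "t \<le> lam" using above unfolding W_def by auto
    then show "0 \<le> (lam - t) * (\<Sum>i<k. \<Sum>j<k. cl lam i * cl lam j * G i j)"
      using psd[of "cl lam"] by simp
  qed
  ultimately show ?thesis
    by (simp add: sum_distrib_left sum_subtractf algebra_simps)
qed

lemma sum_integral_square_pos:
  fixes g :: "'b \<Rightarrow> 'a \<Rightarrow> real"
  assumes "finite A" "\<And>\<alpha>. \<alpha> \<in> A \<Longrightarrow> integrable M (\<lambda>x. (g \<alpha> x)\<^sup>2)"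
    and "\<not> (\<forall>\<alpha>\<in>A. AE x in M. g \<alpha> x = 0)"
  shows "(\<Sum>\<alpha>\<in>A. \<integral>x. (g \<alpha> x)\<^sup>2 \<partial>M) > 0"
proof -
  obtain \<alpha> where \<alpha>: "\<alpha> \<in> A" "\<not> (AE x in M. g \<alpha> x = 0)" using assms(3) by blast
  have "(\<integral>x. (g \<alpha> x)\<^sup>2 \<partial>M) \<noteq> 0"
    using \<alpha> integral_nonneg_eq_0_iff_AE[OF assms(2)[OF \<alpha>(1)]] by auto
  moreover have "(\<integral>x. (g \<alpha> x)\<^sup>2 \<partial>M) \<ge> 0" by (rule integral_nonneg_AE) simp
  ultimately have "(\<integral>x. (g \<alpha> x)\<^sup>2 \<partial>M) > 0" by linarith
  moreover have "(\<integral>x. (g \<alpha> x)\<^sup>2 \<partial>M) \<le> (\<Sum>\<alpha>\<in>A. \<integral>x. (g \<alpha> x)\<^sup>2 \<partial>M)"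
    using assms(1) \<alpha>(1) by (intro member_le_sum integral_nonneg_AE) auto
  ultimately show ?thesis by linarith
qed

lemma finite_S: "finite (S M :: ('d::finite \<Rightarrow> nat) set)"
proof (rule finite_subset)
  show "S M \<subseteq> (\<Pi>\<^sub>E i\<in>(UNIV::'d set). {..M})"
  proof
    fix \<alpha> :: "'d \<Rightarrow> nat" assume "\<alpha> \<in> S M"
    then have "\<alpha> i \<le> M" for i
      unfolding S_def using member_le_sum[of i UNIV \<alpha>] by auto
    then show "\<alpha> \<in> (\<Pi>\<^sub>E i\<in>(UNIV::'d set). {..M})" by auto
  qed
qed (simp add: finite_PiE)

lemma card_S_pos: "card (S M :: ('d::finite \<Rightarrow> nat) set) > 0"
proof -
  have "(\<lambda>_. 0) \<in> S M" unfolding S_def by simp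
  then show ?thesis using finite_S card_gt_0_iff by blast
qed

text \<open>
  The operator \<open>K\<^sup>(\<^sup>M\<^sup>,\<^sup>R\<^sup>)\<close> applied to functions extended by zero outside \<open>B\<^sub>R\<close>, with the
  component index \<open>\<beta>\<close> written first.
\<close>

definition kernel_op :: "(real^'d \<Rightarrow> real^'d \<Rightarrow> real) \<Rightarrow> nat \<Rightarrow> (('d \<Rightarrow> nat) \<Rightarrow> real^'d \<Rightarrow> real)
    \<Rightarrow> real^'d \<Rightarrow> ('d \<Rightarrow> nat) \<Rightarrow> real" where
  "kernel_op K M u x \<alpha> = (\<Sum>\<beta>\<in>S M. \<integral>y. Kab K \<alpha> \<beta> x y * u \<beta> y \<partial>lborel)"

lemma Kop_eq_kernel_op: "Kop K M R f x \<alpha> = kernel_op K M (\<lambda>\<beta> y. indicator (ball 0 R) y * f y \<beta>) x \<alpha>"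
  unfolding Kop_def kernel_op_def set_lebesgue_integral_def
  by (intro sum.cong refl arg_cong[where f="integral\<^sup>L lborel"] ext) (simp add: algebra_simps)

context
  fixes K :: "real^'d \<Rightarrow> real^'d \<Rightarrow> real"
  assumes smooth: "Cinf_b K"
begin

lemma kernel_integral_measurable:
  assumes [measurable]: "u \<in> borel_measurable lborel"
  shows "(\<lambda>x. \<integral>y. Kab K \<alpha> \<beta> x y * u y \<partial>lborel) \<in> borel_measurable lborel"
proof (rule lborel.borel_measurable_lebesgue_integral)
  note Kab_measurable[OF smooth, measurable]
  show "(\<lambda>(x, y). Kab K \<alpha> \<beta> x y * u y) \<in> borel_measurable (lborel \<Otimes>\<^sub>M lborel)"
    by measurable
qed

lemma kernel_op_measurable:
  assumes "\<And>\<beta>. \<beta> \<in> S M \<Longrightarrow> u \<beta> \<in> borel_measurable lborel"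
  shows "(\<lambda>x. kernel_op K M u x \<alpha>) \<in> borel_measurable lborel"
  unfolding kernel_op_def using assms kernel_integral_measurable by (intro borel_measurable_sum) auto

context
  fixes B :: "(real^'d) set"
  assumes B_sets: "B \<in> sets lborel" and B_finite: "emeasure lborel B < \<infinity>"
begin

lemma Kab_mult_integrable:
  assumes "L2_on B u"
  shows "integrable lborel (\<lambda>y. Kab K \<alpha> \<beta> x y * u y)"
proof -
  obtain C where "\<forall>x y. \<bar>Kab K \<alpha> \<beta> x y\<bar> \<le> C" using Kab_bounded[OF smooth] by blast
  then show ?thesis
    by (intro L2_on_bounded_mult_integrable[OF B_sets B_finite assms Kab_measurable_snd[OF smooth]]) blast
qed

lemma kernel_integral_mult_integrable:
  assumes u: "L2_on B u" and v: "L2_on B v"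
  shows "integrable lborel (\<lambda>x. (\<integral>y. Kab K \<alpha> \<beta> x y * u y \<partial>lborel) * v x)"
proof -
  obtain C where C: "\<forall>x y. \<bar>Kab K \<alpha> \<beta> x y\<bar> \<le> C" using Kab_bounded[OF smooth] by blast
  have "\<bar>\<integral>y. Kab K \<alpha> \<beta> x y * u y \<partial>lborel\<bar> \<le> (\<integral>y. \<bar>C\<bar> * \<bar>u y\<bar> \<partial>lborel)" for x
  proof (rule integral_abs_bound_integral)
    show "integrable lborel (\<lambda>y. Kab K \<alpha> \<beta> x y * u y)" by (rule Kab_mult_integrable[OF u])
    show "integrable lborel (\<lambda>y. \<bar>C\<bar> * \<bar>u y\<bar>)" using L2_on_abs_integrable[OF B_sets B_finite u] by simp
    show "\<bar>Kab K \<alpha> \<beta> x y * u y\<bar> \<le> \<bar>C\<bar> * \<bar>u y\<bar>" for y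
      using C[rule_format, of x y] unfolding abs_mult by (intro mult_right_mono) auto
  qed
  moreover have "u \<in> borel_measurable lborel" using u unfolding L2_on_def by auto
  ultimately show ?thesis
    by (intro L2_on_bounded_mult_integrable[OF B_sets B_finite v kernel_integral_measurable]) blast+
qed

lemma kernel_op_mult_integrable:
  assumes "\<And>\<beta>. \<beta> \<in> S M \<Longrightarrow> L2_on B (u \<beta>)" "L2_on B v"
  shows "integrable lborel (\<lambda>x. kernel_op K M u x \<alpha> * v x)"
  unfolding kernel_op_def sum_distrib_right
  using assms kernel_integral_mult_integrable by (intro Bochner_Integration.integrable_sum) auto

lemma kernel_op_sum:
  assumes "\<And>i \<beta>. i \<in> I \<Longrightarrow> \<beta> \<in> S M \<Longrightarrow> L2_on B (u i \<beta>)"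
  shows "kernel_op K M (\<lambda>\<beta> y. \<Sum>i\<in>I. c i * u i \<beta> y) x \<alpha> = (\<Sum>i\<in>I. c i * kernel_op K M (u i) x \<alpha>)"
proof -
  have "kernel_op K M (\<lambda>\<beta> y. \<Sum>i\<in>I. c i * u i \<beta> y) x \<alpha>
      = (\<Sum>\<beta>\<in>S M. \<integral>y. (\<Sum>i\<in>I. c i * (Kab K \<alpha> \<beta> x y * u i \<beta> y)) \<partial>lborel)"
    unfolding kernel_op_def by (simp add: sum_distrib_left algebra_simps)
  also have "\<dots> = (\<Sum>\<beta>\<in>S M. \<Sum>i\<in>I. c i * (\<integral>y. Kab K \<alpha> \<beta> x y * u i \<beta> y \<partial>lborel))"
    using assms Kab_mult_integrable by (intro sum.cong refl, subst Bochner_Integration.integral_sum) auto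
  also have "\<dots> = (\<Sum>i\<in>I. c i * kernel_op K M (u i) x \<alpha>)"
    unfolding kernel_op_def by (subst sum.swap) (simp add: sum_distrib_left)
  finally show ?thesis .
qed

lemma kernel_op_symmetric:
  assumes cov: "covariance_kernel K"
    and u: "\<And>\<beta>. \<beta> \<in> S M \<Longrightarrow> L2_on B (u \<beta>)" and v: "\<And>\<beta>. \<beta> \<in> S M \<Longrightarrow> L2_on B (v \<beta>)"
  shows "(\<Sum>\<alpha>\<in>S M. \<integral>x. kernel_op K M u x \<alpha> * v \<alpha> x \<partial>lborel)
    = (\<Sum>\<alpha>\<in>S M. \<integral>x. u \<alpha> x * kernel_op K M v x \<alpha> \<partial>lborel)"
proof -
  have "(\<Sum>\<alpha>\<in>S M. \<integral>x. kernel_op K M u x \<alpha> * v \<alpha> x \<partial>lborel)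
      = (\<Sum>\<alpha>\<in>S M. \<Sum>\<beta>\<in>S M. \<integral>x. (\<integral>y. Kab K \<alpha> \<beta> x y * u \<beta> y \<partial>lborel) * v \<alpha> x \<partial>lborel)"
    unfolding kernel_op_def sum_distrib_right
    using kernel_integral_mult_integrable u v
    by (intro sum.cong refl, subst Bochner_Integration.integral_sum) auto
  also have "\<dots> = (\<Sum>\<alpha>\<in>S M. \<Sum>\<beta>\<in>S M. \<integral>y. u \<beta> y * (\<integral>x. Kab K \<alpha> \<beta> x y * v \<alpha> x \<partial>lborel) \<partial>lborel)"
  proof (intro sum.cong refl)
    fix \<alpha> \<beta> :: "'d \<Rightarrow> nat" assume "\<alpha> \<in> S M" "\<beta> \<in> S M"
    moreover obtain C where "\<forall>x y. \<bar>Kab K \<alpha> \<beta> x y\<bar> \<le> C" using Kab_bounded[OF smooth] by blast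
    ultimately show "(\<integral>x. (\<integral>y. Kab K \<alpha> \<beta> x y * u \<beta> y \<partial>lborel) * v \<alpha> x \<partial>lborel)
        = (\<integral>y. u \<beta> y * (\<integral>x. Kab K \<alpha> \<beta> x y * v \<alpha> x \<partial>lborel) \<partial>lborel)"
      using u v by (intro Fubini_bounded_kernel[OF B_sets B_finite Kab_measurable[OF smooth]]) auto
  qed
  also have "\<dots> = (\<Sum>\<beta>\<in>S M. \<Sum>\<alpha>\<in>S M. \<integral>y. (\<integral>x. Kab K \<beta> \<alpha> y x * v \<alpha> x \<partial>lborel) * u \<beta> y \<partial>lborel)"
    by (subst sum.swap) (simp add: Kab_symmetric[OF cov smooth] mult.commute)
  also have "\<dots> = (\<Sum>\<beta>\<in>S M. \<integral>y. u \<beta> y * kernel_op K M v y \<beta> \<partial>lborel)"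
  proof (rule sum.cong[OF refl])
    fix \<beta> :: "'d \<Rightarrow> nat" assume \<beta>: "\<beta> \<in> S M"
    have "(\<integral>y. u \<beta> y * kernel_op K M v y \<beta> \<partial>lborel)
        = (\<integral>y. (\<Sum>\<alpha>\<in>S M. (\<integral>x. Kab K \<beta> \<alpha> y x * v \<alpha> x \<partial>lborel) * u \<beta> y) \<partial>lborel)"
      unfolding kernel_op_def by (simp add: sum_distrib_left mult.commute)
    also have "\<dots> = (\<Sum>\<alpha>\<in>S M. \<integral>y. (\<integral>x. Kab K \<beta> \<alpha> y x * v \<alpha> x \<partial>lborel) * u \<beta> y \<partial>lborel)"
      using kernel_integral_mult_integrable u v \<beta> by (subst Bochner_Integration.integral_sum) auto
    finally show "(\<Sum>\<alpha>\<in>S M. \<integral>y. (\<integral>x. Kab K \<beta> \<alpha> y x * v \<alpha> x \<partial>lborel) * u \<beta> y \<partial>lborel)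
        = (\<integral>y. u \<beta> y * kernel_op K M v y \<beta> \<partial>lborel)" by simp
  qed
  finally show ?thesis .
qed

lemma kernel_integral_bound_on_orthogonal:
  assumes g: "L2_on B g"
    and b: "\<And>j. b j \<in> borel_measurable lborel" "\<And>j y. \<bar>b j y\<bar> \<le> Cb"
    and approx: "\<And>y. y \<in> B \<Longrightarrow> \<bar>Kab K \<alpha> \<beta> x y - (\<Sum>j\<in>J. a j * b j y)\<bar> \<le> e"
    and orth: "\<And>j. j \<in> J \<Longrightarrow> (\<integral>y. b j y * g y \<partial>lborel) = 0"
  shows "\<bar>\<integral>y. Kab K \<alpha> \<beta> x y * g y \<partial>lborel\<bar> \<le> e * (\<integral>y. \<bar>g y\<bar> \<partial>lborel)"
proof -
  define F where "F y = (\<Sum>j\<in>J. a j * b j y)" for y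
  have F_g: "(\<lambda>y. F y * g y) = (\<lambda>y. \<Sum>j\<in>J. a j * (b j y * g y))"
    unfolding F_def sum_distrib_right by (simp add: mult.assoc)
  have b_g: "integrable lborel (\<lambda>y. b j y * g y)" for j
    using L2_on_bounded_mult_integrable[OF B_sets B_finite g b(1)] b(2) by blast
  have K_g: "integrable lborel (\<lambda>y. Kab K \<alpha> \<beta> x y * g y)"
    by (rule Kab_mult_integrable[OF g])
  have F_int: "integrable lborel (\<lambda>y. F y * g y)"
    unfolding F_g using b_g
    by (intro Bochner_Integration.integrable_sum Bochner_Integration.integrable_mult_right)
  have "(\<integral>y. F y * g y \<partial>lborel) = 0"
    unfolding F_g using b_g orth by (subst Bochner_Integration.integral_sum) auto
  then have "(\<integral>y. Kab K \<alpha> \<beta> x y * g y \<partial>lborel) = (\<integral>y. Kab K \<alpha> \<beta> x y * g y - F y * g y \<partial>lborel)"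
    using K_g F_int by (simp add: Bochner_Integration.integral_diff)
  also have "\<bar>\<dots>\<bar> \<le> (\<integral>y. e * \<bar>g y\<bar> \<partial>lborel)"
  proof (rule integral_abs_bound_integral)
    show "integrable lborel (\<lambda>y. Kab K \<alpha> \<beta> x y * g y - F y * g y)"
      using K_g F_int by auto
    show "integrable lborel (\<lambda>y. e * \<bar>g y\<bar>)"
      using L2_on_abs_integrable[OF B_sets B_finite g] by auto
    have "\<bar>Kab K \<alpha> \<beta> x y - F y\<bar> * \<bar>g y\<bar> \<le> e * \<bar>g y\<bar>" for y
    proof (cases "y \<in> B")
      case True
      show ?thesis unfolding F_def using approx[OF True] by (rule mult_right_mono) simp
    next
      case False
      then show ?thesis using g unfolding L2_on_def by simp
    qed
    then show "\<bar>Kab K \<alpha> \<beta> x y * g y - F y * g y\<bar> \<le> e * \<bar>g y\<bar>" for y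
      by (simp add: abs_mult left_diff_distrib[symmetric])
  qed
  finally show ?thesis by simp
qed

lemma kernel_op_bound_on_orthogonal:
  assumes g: "\<And>\<beta>. \<beta> \<in> S M \<Longrightarrow> L2_on B (g \<beta>)"
    and b: "\<And>j. b j \<in> borel_measurable lborel" "\<And>j y. \<bar>b j y\<bar> \<le> Cb"
    and approx: "\<And>\<alpha> \<beta> x y. \<alpha> \<in> S M \<Longrightarrow> \<beta> \<in> S M \<Longrightarrow> x \<in> B \<Longrightarrow> y \<in> B \<Longrightarrow>
        \<bar>Kab K \<alpha> \<beta> x y - (\<Sum>j\<in>J. a \<alpha> \<beta> j x * b j y)\<bar> \<le> e"
    and orth: "\<And>\<beta> j. \<beta> \<in> S M \<Longrightarrow> j \<in> J \<Longrightarrow> (\<integral>y. b j y * g \<beta> y \<partial>lborel) = 0"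
    and x: "x \<in> B" and \<alpha>: "\<alpha> \<in> S M"
  shows "\<bar>kernel_op K M g x \<alpha>\<bar> \<le> e * (\<Sum>\<beta>\<in>S M. \<integral>y. \<bar>g \<beta> y\<bar> \<partial>lborel)"
proof -
  have "\<bar>\<integral>y. Kab K \<alpha> \<beta> x y * g \<beta> y \<partial>lborel\<bar> \<le> e * (\<integral>y. \<bar>g \<beta> y\<bar> \<partial>lborel)"
    if \<beta>: "\<beta> \<in> S M" for \<beta>
    by (rule kernel_integral_bound_on_orthogonal[OF g[OF \<beta>] b approx[OF \<alpha> \<beta> x] orth[OF \<beta>]])
  then have "(\<Sum>\<beta>\<in>S M. \<bar>\<integral>y. Kab K \<alpha> \<beta> x y * g \<beta> y \<partial>lborel\<bar>)
      \<le> (\<Sum>\<beta>\<in>S M. e * (\<integral>y. \<bar>g \<beta> y\<bar> \<partial>lborel))"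
    by (rule sum_mono)
  then show ?thesis
    unfolding kernel_op_def sum_distrib_left by (rule order_trans[OF sum_abs])
qed

lemma kernel_form_le_on_orthogonal:
  assumes pos: "measure lborel B > 0" and e: "e \<ge> 0"
    and g: "\<And>\<beta>. \<beta> \<in> S M \<Longrightarrow> L2_on B (g \<beta>)"
    and b: "\<And>j. b j \<in> borel_measurable lborel" "\<And>j y. \<bar>b j y\<bar> \<le> Cb"
    and approx: "\<And>\<alpha> \<beta> x y. \<alpha> \<in> S M \<Longrightarrow> \<beta> \<in> S M \<Longrightarrow> x \<in> B \<Longrightarrow> y \<in> B \<Longrightarrow>
        \<bar>Kab K \<alpha> \<beta> x y - (\<Sum>j\<in>J. a \<alpha> \<beta> j x * b j y)\<bar> \<le> e"
    and orth: "\<And>\<beta> j. \<beta> \<in> S M \<Longrightarrow> j \<in> J \<Longrightarrow> (\<integral>y. b j y * g \<beta> y \<partial>lborel) = 0"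
  shows "(\<Sum>\<alpha>\<in>S M. \<integral>x. kernel_op K M g x \<alpha> * g \<alpha> x \<partial>lborel)
    \<le> e * card (S M :: ('d \<Rightarrow> nat) set) * measure lborel B * (\<Sum>\<alpha>\<in>S M. \<integral>x. (g \<alpha> x)\<^sup>2 \<partial>lborel)"
proof -
  define P where "P = (\<Sum>\<beta>\<in>S M. \<integral>y. \<bar>g \<beta> y\<bar> \<partial>lborel)"
  have "(\<integral>x. kernel_op K M g x \<alpha> * g \<alpha> x \<partial>lborel) \<le> (\<integral>x. e * P * \<bar>g \<alpha> x\<bar> \<partial>lborel)"
    if \<alpha>: "\<alpha> \<in> S M" for \<alpha>
  proof (rule integral_mono)
    show "integrable lborel (\<lambda>x. kernel_op K M g x \<alpha> * g \<alpha> x)"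
      by (rule kernel_op_mult_integrable[OF g g[OF \<alpha>]])
    show "integrable lborel (\<lambda>x. e * P * \<bar>g \<alpha> x\<bar>)"
      using L2_on_abs_integrable[OF B_sets B_finite g[OF \<alpha>]] by auto
    have "\<bar>kernel_op K M g x \<alpha>\<bar> * \<bar>g \<alpha> x\<bar> \<le> e * P * \<bar>g \<alpha> x\<bar>" for x
    proof (cases "x \<in> B")
      case True
      have "\<bar>kernel_op K M g x \<alpha>\<bar> \<le> e * P"
        unfolding P_def by (rule kernel_op_bound_on_orthogonal[OF g b approx orth True \<alpha>])
      then show ?thesis by (rule mult_right_mono) simp
    next
      case False
      then show ?thesis using g[OF \<alpha>] unfolding L2_on_def by simp
    qed
    then show "kernel_op K M g x \<alpha> * g \<alpha> x \<le> e * P * \<bar>g \<alpha> x\<bar>" for x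
      by (metis abs_ge_self abs_mult order_trans)
  qed
  then have "(\<Sum>\<alpha>\<in>S M. \<integral>x. kernel_op K M g x \<alpha> * g \<alpha> x \<partial>lborel) \<le> e * P * P"
    unfolding P_def sum_distrib_left by (intro sum_mono) simp
  also have "\<dots> \<le> e * (card (S M :: ('d \<Rightarrow> nat) set) * measure lborel B * (\<Sum>\<alpha>\<in>S M. \<integral>x. (g \<alpha> x)\<^sup>2 \<partial>lborel))"
  proof -
    have "P\<^sup>2 \<le> (\<Sum>\<beta>\<in>S M. (\<integral>y. \<bar>g \<beta> y\<bar> \<partial>lborel)\<^sup>2) * card (S M :: ('d \<Rightarrow> nat) set)"
      unfolding P_def by (rule sum_squared_le_sum_of_squares)
    also have "\<dots> \<le> (\<Sum>\<beta>\<in>S M. measure lborel B * (\<integral>y. (g \<beta> y)\<^sup>2 \<partial>lborel)) * card (S M :: ('d \<Rightarrow> nat) set)"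
      using L2_on_L1_norm_squared_le[OF B_sets B_finite pos g] by (intro mult_right_mono sum_mono) auto
    finally have "P\<^sup>2 \<le> card (S M :: ('d \<Rightarrow> nat) set) * measure lborel B * (\<Sum>\<alpha>\<in>S M. \<integral>x. (g \<alpha> x)\<^sup>2 \<partial>lborel)"
      by (simp add: sum_distrib_left mult_ac)
    from mult_left_mono[OF this e] show ?thesis by (simp add: power2_eq_square mult.assoc)
  qed
  finally show ?thesis by (simp add: mult.assoc)
qed

lemma kernel_form_eigen:
  assumes u: "\<And>\<beta>. \<beta> \<in> S M \<Longrightarrow> L2_on B (u \<beta>)" and v: "\<And>\<beta>. \<beta> \<in> S M \<Longrightarrow> L2_on B (v \<beta>)"
    and eig: "\<And>\<alpha>. \<alpha> \<in> S M \<Longrightarrow> AE x in lborel. x \<in> B \<longrightarrow> kernel_op K M u x \<alpha> = \<mu> * u \<alpha> x"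
  shows "(\<Sum>\<alpha>\<in>S M. \<integral>x. kernel_op K M u x \<alpha> * v \<alpha> x \<partial>lborel)
    = \<mu> * (\<Sum>\<alpha>\<in>S M. \<integral>x. u \<alpha> x * v \<alpha> x \<partial>lborel)"
proof -
  have "(\<integral>x. kernel_op K M u x \<alpha> * v \<alpha> x \<partial>lborel) = (\<integral>x. \<mu> * (u \<alpha> x * v \<alpha> x) \<partial>lborel)"
    if \<alpha>: "\<alpha> \<in> S M" for \<alpha>
  proof (rule integral_cong_AE)
    have [measurable]: "u \<beta> \<in> borel_measurable lborel" "v \<beta> \<in> borel_measurable lborel"
      if "\<beta> \<in> S M" for \<beta>
      using u[OF that] v[OF that] unfolding L2_on_def by auto
    show "(\<lambda>x. kernel_op K M u x \<alpha> * v \<alpha> x) \<in> borel_measurable lborel"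
      using kernel_op_measurable \<alpha> by auto
    show "(\<lambda>x. \<mu> * (u \<alpha> x * v \<alpha> x)) \<in> borel_measurable lborel" using \<alpha> by auto
    show "AE x in lborel. kernel_op K M u x \<alpha> * v \<alpha> x = \<mu> * (u \<alpha> x * v \<alpha> x)"
      using eig[OF \<alpha>] by eventually_elim (use v[OF \<alpha>] in \<open>auto simp: L2_on_def\<close>)
  qed
  then show ?thesis by (simp add: sum_distrib_left)
qed

lemma eigenfunctions_orthogonal:
  assumes cov: "covariance_kernel K"
    and u: "\<And>\<beta>. \<beta> \<in> S M \<Longrightarrow> L2_on B (u \<beta>)" and v: "\<And>\<beta>. \<beta> \<in> S M \<Longrightarrow> L2_on B (v \<beta>)"
    and eig_u: "\<And>\<alpha>. \<alpha> \<in> S M \<Longrightarrow> AE x in lborel. x \<in> B \<longrightarrow> kernel_op K M u x \<alpha> = \<mu> * u \<alpha> x"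
    and eig_v: "\<And>\<alpha>. \<alpha> \<in> S M \<Longrightarrow> AE x in lborel. x \<in> B \<longrightarrow> kernel_op K M v x \<alpha> = \<nu> * v \<alpha> x"
    and ne: "\<mu> \<noteq> \<nu>"
  shows "(\<Sum>\<alpha>\<in>S M. \<integral>x. u \<alpha> x * v \<alpha> x \<partial>lborel) = 0"
proof -
  have "\<mu> * (\<Sum>\<alpha>\<in>S M. \<integral>x. u \<alpha> x * v \<alpha> x \<partial>lborel) = (\<Sum>\<alpha>\<in>S M. \<integral>x. kernel_op K M u x \<alpha> * v \<alpha> x \<partial>lborel)"
    by (rule kernel_form_eigen[OF u v eig_u, symmetric])
  also have "\<dots> = (\<Sum>\<alpha>\<in>S M. \<integral>x. kernel_op K M v x \<alpha> * u \<alpha> x \<partial>lborel)"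
    using kernel_op_symmetric[OF cov u v] by (simp add: mult.commute)
  also have "\<dots> = \<nu> * (\<Sum>\<alpha>\<in>S M. \<integral>x. u \<alpha> x * v \<alpha> x \<partial>lborel)"
    using kernel_form_eigen[OF v u eig_v] by (simp add: mult.commute)
  finally show ?thesis using ne by simp
qed

lemma kernel_form_ge_on_eigen_combination:
  fixes c :: "nat \<Rightarrow> real"
  assumes cov: "covariance_kernel K"
    and f: "\<And>i \<beta>. i < k \<Longrightarrow> \<beta> \<in> S M \<Longrightarrow> L2_on B (f i \<beta>)"
    and eig: "\<And>i \<alpha>. i < k \<Longrightarrow> \<alpha> \<in> S M \<Longrightarrow>
        AE x in lborel. x \<in> B \<longrightarrow> kernel_op K M (f i) x \<alpha> = \<mu> i * f i \<alpha> x"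
    and above: "\<And>i. i < k \<Longrightarrow> t \<le> \<mu> i"
  defines "g \<equiv> \<lambda>\<beta> y. \<Sum>i<k. c i * f i \<beta> y"
  shows "t * (\<Sum>\<alpha>\<in>S M. \<integral>x. (g \<alpha> x)\<^sup>2 \<partial>lborel) \<le> (\<Sum>\<alpha>\<in>S M. \<integral>x. kernel_op K M g x \<alpha> * g \<alpha> x \<partial>lborel)"
proof -
  define G where "G i j = (\<Sum>\<alpha>\<in>S M. \<integral>x. f i \<alpha> x * f j \<alpha> x \<partial>lborel)" for i j
  have expand: "(\<Sum>\<alpha>\<in>S M. \<integral>x. (\<Sum>i<k. p i * f i \<alpha> x) * (\<Sum>j<k. q j * f j \<alpha> x) \<partial>lborel)
      = (\<Sum>i<k. \<Sum>j<k. p i * q j * G i j)" for p q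
    unfolding G_def using f by (intro integral_sum_products L2_on_mult_integrable[OF B_sets B_finite]) auto
  have "t * (\<Sum>i<k. \<Sum>j<k. c i * c j * G i j) \<le> (\<Sum>i<k. \<Sum>j<k. c i * \<mu> i * c j * G i j)"
  proof (rule quadratic_form_eigen_lower_bound)
    show "0 \<le> (\<Sum>i<k. \<Sum>j<k. p i * p j * G i j)" for p
    proof -
      have "0 \<le> (\<Sum>\<alpha>\<in>S M. \<integral>x. (\<Sum>i<k. p i * f i \<alpha> x) * (\<Sum>j<k. p j * f j \<alpha> x) \<partial>lborel)"
        by (intro sum_nonneg integral_nonneg_AE) auto
      then show ?thesis using expand[of p p] by simp
    qed
    show "G i j = 0" if "i < k" "j < k" "\<mu> i \<noteq> \<mu> j" for i j
      unfolding G_def using that f eig by (intro eigenfunctions_orthogonal[OF cov]) auto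
  qed (rule above)
  moreover have "(\<Sum>\<alpha>\<in>S M. \<integral>x. (g \<alpha> x)\<^sup>2 \<partial>lborel) = (\<Sum>i<k. \<Sum>j<k. c i * c j * G i j)"
    using expand[of c c] by (simp add: g_def power2_eq_square)
  moreover have "(\<Sum>\<alpha>\<in>S M. \<integral>x. kernel_op K M g x \<alpha> * g \<alpha> x \<partial>lborel)
      = (\<Sum>i<k. \<Sum>j<k. c i * \<mu> i * c j * G i j)"
  proof -
    have "(\<Sum>\<alpha>\<in>S M. \<integral>x. kernel_op K M g x \<alpha> * g \<alpha> x \<partial>lborel)
        = (\<Sum>\<alpha>\<in>S M. \<integral>x. (\<Sum>i<k. c i * kernel_op K M (f i) x \<alpha>) * (\<Sum>j<k. c j * f j \<alpha> x) \<partial>lborel)"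
      unfolding g_def using f by (subst kernel_op_sum) auto
    also have "\<dots> = (\<Sum>i<k. \<Sum>j<k. c i * c j * (\<Sum>\<alpha>\<in>S M. \<integral>x. kernel_op K M (f i) x \<alpha> * f j \<alpha> x \<partial>lborel))"
      using f by (intro integral_sum_products kernel_op_mult_integrable) auto
    also have "\<dots> = (\<Sum>i<k. \<Sum>j<k. c i * \<mu> i * c j * G i j)"
      unfolding G_def using f eig by (intro sum.cong refl) (subst kernel_form_eigen; auto)
    finally show ?thesis .
  qed
  ultimately show ?thesis by simp
qed

end

end

section \<open>Counting eigenvalues by finite-rank approximation\<close>

lemma is_eigfun_extension:
  fixes f :: "real^'d \<Rightarrow> ('d \<Rightarrow> nat) \<Rightarrow> real"
  assumes "is_eigfun K M R \<mu> f"
  defines "u \<equiv> \<lambda>\<beta> y. indicator (ball 0 R) y * f y \<beta>"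
  shows "\<And>\<beta>. \<beta> \<in> S M \<Longrightarrow> L2_on (ball 0 R) (u \<beta>)"
    and "\<And>\<alpha>. \<alpha> \<in> S M \<Longrightarrow> AE x in lborel. x \<in> ball 0 R \<longrightarrow> kernel_op K M u x \<alpha> = \<mu> * u \<alpha> x"
proof -
  fix \<beta> :: "'d \<Rightarrow> nat" assume "\<beta> \<in> S M"
  then have "(\<lambda>y. indicator (ball 0 R) y * f y \<beta>) \<in> borel_measurable lborel"
    and "integrable lborel (\<lambda>y. indicator (ball 0 R) y *\<^sub>R (f y \<beta>)\<^sup>2)"
    using assms unfolding is_eigfun_def L2S_def set_integrable_def by auto
  moreover have "(\<lambda>y. (u \<beta> y)\<^sup>2) = (\<lambda>y. indicator (ball 0 R) y *\<^sub>R (f y \<beta>)\<^sup>2)"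
    by (auto simp: u_def indicator_def fun_eq_iff)
  ultimately show "L2_on (ball 0 R) (u \<beta>)" unfolding L2_on_def by (auto simp: u_def)
next
  fix \<alpha> :: "'d \<Rightarrow> nat" assume "\<alpha> \<in> S M"
  then have "AE x in lborel. x \<in> ball 0 R \<longrightarrow> Kop K M R f x \<alpha> = \<mu> * f x \<alpha>"
    using assms unfolding is_eigfun_def by auto
  then show "AE x in lborel. x \<in> ball 0 R \<longrightarrow> kernel_op K M u x \<alpha> = \<mu> * u \<alpha> x"
    by eventually_elim (simp add: Kop_eq_kernel_op u_def)
qed

lemma homogeneous_system_nontrivial_solution:
  fixes A :: "'j \<Rightarrow> nat \<Rightarrow> real"
  shows "finite J \<Longrightarrow> card J < k \<Longrightarrow> \<exists>c. (\<exists>i<k. c i \<noteq> 0) \<and> (\<forall>j\<in>J. (\<Sum>i<k. A j i * c i) = 0)"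
proof (induction k arbitrary: J A)
  case 0
  then show ?case by simp
next
  case (Suc k)
  show ?case
  proof (cases "\<forall>j\<in>J. A j k = 0")
    case True
    define c where "c i = (if i = k then 1 else (0::real))" for i
    have "(\<Sum>i<Suc k. A j i * c i) = 0" if "j \<in> J" for j
      using True that by (simp add: c_def)
    moreover have "c k \<noteq> 0" by (simp add: c_def)
    ultimately show ?thesis by blast
  next
    case False
    then obtain j0 where j0: "j0 \<in> J" "A j0 k \<noteq> 0" by blast
    define J' where "J' = J - {j0}"
    have "finite J'" using Suc.prems unfolding J'_def by simp
    moreover have "card J' < k"
      using Suc.prems j0 card_gt_0_iff[of J] unfolding J'_def by (auto simp: card_Diff_singleton)
    txt \<open>Gaussian elimination of the last unknown using equation \<open>j0\<close>.\<close>
    ultimately obtain c' where c': "\<exists>i<k. c' i \<noteq> 0"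
      "\<forall>j\<in>J'. (\<Sum>i<k. (A j i - A j k * A j0 i / A j0 k) * c' i) = 0"
      using Suc.IH[of J' "\<lambda>j i. A j i - A j k * A j0 i / A j0 k"] by blast
    define S0 where "S0 = (\<Sum>i<k. A j0 i * c' i)"
    define c where "c i = (if i < k then c' i else if i = k then - S0 / A j0 k else 0)" for i
    have sum_c: "(\<Sum>i<Suc k. A j i * c i) = (\<Sum>i<k. A j i * c' i) - A j k * S0 / A j0 k" for j
      by (simp add: c_def)
    have "(\<Sum>i<Suc k. A j i * c i) = 0" if "j \<in> J" for j
    proof (cases "j = j0")
      case True
      then show ?thesis using sum_c[of j] j0 by (simp add: S0_def)
    next
      case False
      then have "(\<Sum>i<k. (A j i - A j k * A j0 i / A j0 k) * c' i) = 0"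
        using that c' unfolding J'_def by blast
      then show ?thesis
        unfolding sum_c S0_def
        by (simp add: sum_subtractf sum_distrib_left sum_divide_distrib algebra_simps)
    qed
    moreover have "\<exists>i<Suc k. c i \<noteq> 0" using c' by (auto simp: c_def)
    ultimately show ?thesis by blast
  qed
qed

lemma exists_orthogonal_combination:
  fixes f :: "nat \<Rightarrow> ('d \<Rightarrow> nat) \<Rightarrow> real^'d \<Rightarrow> real" and b :: "'j \<Rightarrow> real^'d \<Rightarrow> real"
  assumes B: "B \<in> sets lborel" "emeasure lborel B < \<infinity>"
    and f: "\<And>i \<beta>. i < k \<Longrightarrow> \<beta> \<in> S M \<Longrightarrow> L2_on B (f i \<beta>)"
    and b: "\<And>j. b j \<in> borel_measurable lborel" "\<And>j y. \<bar>b j y\<bar> \<le> Cb"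
    and J: "finite J" and k: "card (S M :: ('d \<Rightarrow> nat) set) * card J < k"
  obtains c where "\<exists>i<k. c i \<noteq> 0"
    and "\<And>\<beta> j. \<beta> \<in> S M \<Longrightarrow> j \<in> J \<Longrightarrow> (\<integral>y. b j y * (\<Sum>i<k. c i * f i \<beta> y) \<partial>lborel) = 0"
proof -
  obtain c where c: "\<exists>i<k. c i \<noteq> 0"
    "\<forall>(\<beta>, j)\<in>S M \<times> J. (\<Sum>i<k. (\<integral>y. b j y * f i \<beta> y \<partial>lborel) * c i) = 0"
    using homogeneous_system_nontrivial_solution[OF finite_cartesian_product[OF finite_S[where 'd='d, of M] J],
        where k=k and A="\<lambda>(\<beta>, j) i. \<integral>y. b j y * f i \<beta> y \<partial>lborel"] k J finite_S[where 'd='d, of M]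
    by (auto simp: card_cartesian_product)
  have "(\<integral>y. b j y * (\<Sum>i<k. c i * f i \<beta> y) \<partial>lborel) = 0" if "\<beta> \<in> S M" "j \<in> J" for \<beta> j
  proof -
    have "integrable lborel (\<lambda>y. b j y * f i \<beta> y)" if "i < k" for i
      using f that \<open>\<beta> \<in> S M\<close> b by (intro L2_on_bounded_mult_integrable[OF B]) auto
    then have "(\<integral>y. b j y * (\<Sum>i<k. c i * f i \<beta> y) \<partial>lborel) = (\<Sum>i<k. (\<integral>y. b j y * f i \<beta> y \<partial>lborel) * c i)"
      unfolding sum_distrib_left by (subst Bochner_Integration.integral_sum) (auto simp: mult_ac)
    then show ?thesis using c(2) that by auto
  qed
  with c(1) show ?thesis by (rule that)
qed

lemma independent_eigenfunctions_le_rank: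
  fixes K :: "real^'d \<Rightarrow> real^'d \<Rightarrow> real" and f :: "nat \<Rightarrow> ('d \<Rightarrow> nat) \<Rightarrow> real^'d \<Rightarrow> real"
    and a :: "('d \<Rightarrow> nat) \<Rightarrow> ('d \<Rightarrow> nat) \<Rightarrow> 'j \<Rightarrow> real^'d \<Rightarrow> real" and b :: "'j \<Rightarrow> real^'d \<Rightarrow> real"
  assumes cov: "covariance_kernel K" and smooth: "Cinf_b K"
    and B: "B \<in> sets lborel" "emeasure lborel B < \<infinity>" "measure lborel B > 0"
    and J: "finite J" and b: "\<And>j. b j \<in> borel_measurable lborel" "\<And>j y. \<bar>b j y\<bar> \<le> Cb"
    and approx: "\<And>\<alpha> \<beta> x y. \<alpha> \<in> S M \<Longrightarrow> \<beta> \<in> S M \<Longrightarrow> x \<in> B \<Longrightarrow> y \<in> B \<Longrightarrow>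
        \<bar>Kab K \<alpha> \<beta> x y - (\<Sum>j\<in>J. a \<alpha> \<beta> j x * b j y)\<bar> \<le> e"
    and e: "e \<ge> 0" and t: "e * measure lborel B * card (S M :: ('d \<Rightarrow> nat) set) < t"
    and f: "\<And>i \<beta>. i < k \<Longrightarrow> \<beta> \<in> S M \<Longrightarrow> L2_on B (f i \<beta>)"
    and eig: "\<And>i \<alpha>. i < k \<Longrightarrow> \<alpha> \<in> S M \<Longrightarrow>
        AE x in lborel. x \<in> B \<longrightarrow> kernel_op K M (f i) x \<alpha> = \<mu> i * f i \<alpha> x"
    and above: "\<And>i. i < k \<Longrightarrow> t < \<mu> i"
    and indep: "\<And>c. \<forall>\<alpha>\<in>S M. AE x in lborel. (\<Sum>i<k. c i * f i \<alpha> x) = 0 \<Longrightarrow> \<forall>i<k. c i = 0"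
  shows "k \<le> card (S M :: ('d \<Rightarrow> nat) set) * card J"
proof (rule ccontr)
  assume "\<not> ?thesis"
  then have k: "card (S M :: ('d \<Rightarrow> nat) set) * card J < k" by simp
  obtain c where c: "\<exists>i<k. c i \<noteq> 0"
    and orth: "\<And>\<beta> j. \<beta> \<in> S M \<Longrightarrow> j \<in> J \<Longrightarrow> (\<integral>y. b j y * (\<Sum>i<k. c i * f i \<beta> y) \<partial>lborel) = 0"
    using exists_orthogonal_combination[where f=f and b=b, OF B(1,2) f b J k] by blast
  define g where "g \<beta> y = (\<Sum>i<k. c i * f i \<beta> y)" for \<beta> y
  have g: "L2_on B (g \<beta>)" if "\<beta> \<in> S M" for \<beta>
    unfolding g_def using f that by (intro L2_on_sum[OF B(1,2)]) auto
  define Q where "Q = (\<Sum>\<alpha>\<in>S M. \<integral>x. (g \<alpha> x)\<^sup>2 \<partial>lborel)"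
  have "Q > 0" unfolding Q_def
  proof (rule sum_integral_square_pos[OF finite_S])
    show "integrable lborel (\<lambda>x. (g \<alpha> x)\<^sup>2)" if "\<alpha> \<in> S M" for \<alpha>
      using g[OF that] unfolding L2_on_def by auto
    show "\<not> (\<forall>\<alpha>\<in>S M. AE x in lborel. g \<alpha> x = 0)"
      using indep[of c] c(1) unfolding g_def by auto
  qed
  have "t * Q \<le> (\<Sum>\<alpha>\<in>S M. \<integral>x. kernel_op K M g x \<alpha> * g \<alpha> x \<partial>lborel)"
    unfolding Q_def g_def using f eig above
    by (intro kernel_form_ge_on_eigen_combination[OF smooth B(1,2) cov, where \<mu>=\<mu>])
      (auto simp: less_imp_le)
  also have "\<dots> \<le> e * card (S M :: ('d \<Rightarrow> nat) set) * measure lborel B * Q"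
    unfolding Q_def using g b approx orth[unfolded g_def[symmetric]]
    by (intro kernel_form_le_on_orthogonal[OF smooth B, where a=a and J=J and b=b and Cb=Cb]) (auto simp: e)
  finally have "t \<le> e * card (S M :: ('d \<Rightarrow> nat) set) * measure lborel B"
    using \<open>Q > 0\<close> by simp
  then show False using t by (simp add: mult_ac)
qed

lemma count_above_le_rank:
  fixes K :: "real^'d \<Rightarrow> real^'d \<Rightarrow> real"
    and a :: "('d \<Rightarrow> nat) \<Rightarrow> ('d \<Rightarrow> nat) \<Rightarrow> 'j \<Rightarrow> real^'d \<Rightarrow> real" and b :: "'j \<Rightarrow> real^'d \<Rightarrow> real"
  assumes cov: "covariance_kernel K" and smooth: "Cinf_b K" and R: "R > 0"
    and J: "finite J" and b: "\<And>j. b j \<in> borel_measurable lborel" "\<And>j y. \<bar>b j y\<bar> \<le> Cb"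
    and approx: "\<And>\<alpha> \<beta> x y. \<alpha> \<in> S M \<Longrightarrow> \<beta> \<in> S M \<Longrightarrow> x \<in> ball 0 R \<Longrightarrow> y \<in> ball 0 R \<Longrightarrow>
        \<bar>Kab K \<alpha> \<beta> x y - (\<Sum>j\<in>J. a \<alpha> \<beta> j x * b j y)\<bar> \<le> e"
    and e: "e \<ge> 0" and t: "e * measure lborel (ball (0::real^'d) R) * card (S M :: ('d \<Rightarrow> nat) set) < t"
  shows "count_above K M R t \<le> enat (card (S M :: ('d \<Rightarrow> nat) set) * card J)"
  unfolding count_above_def
proof (rule Sup_least, clarify)
  fix k :: nat and fs :: "nat \<Rightarrow> real^'d \<Rightarrow> ('d \<Rightarrow> nat) \<Rightarrow> real" and \<mu> :: "nat \<Rightarrow> real"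
  assume eig: "\<forall>i<k. t < \<mu> i \<and> is_eigfun K M R (\<mu> i) (fs i)"
    and indep: "\<forall>c. (\<forall>\<alpha>\<in>S M. AE x in lborel. x \<in> ball 0 R \<longrightarrow> (\<Sum>i<k. c i * fs i x \<alpha>) = 0)
      \<longrightarrow> (\<forall>i<k. c i = 0)"
  define f where "f i \<beta> y = indicator (ball 0 R) y * fs i y \<beta>" for i \<beta> y
  have "k \<le> card (S M :: ('d \<Rightarrow> nat) set) * card J"
  proof (rule independent_eigenfunctions_le_rank[OF cov smooth _ _ _ J b approx e t])
    show "L2_on (ball 0 R) (f i \<beta>)" if "i < k" "\<beta> \<in> S M" for i \<beta>
      using is_eigfun_extension(1)[of K M R "\<mu> i" "fs i"] eig that unfolding f_def by auto
    show "AE x in lborel. x \<in> ball 0 R \<longrightarrow> kernel_op K M (f i) x \<alpha> = \<mu> i * f i \<alpha> x"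
      if "i < k" "\<alpha> \<in> S M" for i \<alpha>
      using is_eigfun_extension(2)[of K M R "\<mu> i" "fs i"] eig that unfolding f_def by auto
    show "\<forall>i<k. c i = 0" if "\<forall>\<alpha>\<in>S M. AE x in lborel. (\<Sum>i<k. c i * f i \<alpha> x) = 0" for c
    proof -
      have "AE x in lborel. x \<in> ball 0 R \<longrightarrow> (\<Sum>i<k. c i * fs i x \<alpha>) = 0" if "\<alpha> \<in> S M" for \<alpha>
      proof -
        have "AE x in lborel. (\<Sum>i<k. c i * f i \<alpha> x) = 0" using \<open>\<forall>\<alpha>\<in>S M. _\<close> that by blast
        then show ?thesis by eventually_elim (auto simp: f_def indicator_def)
      qed
      then show ?thesis using indep by blast
    qed
  qed (use eig R content_ball_pos[OF R] emeasure_bounded_finite[OF bounded_ball] in auto)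
  then show "enat k \<le> enat (card (S M :: ('d \<Rightarrow> nat) set) * card J)" by simp
qed

lemma eigval_le_of_count_above:
  assumes "0 \<le> t" "count_above K M R t < enat n"
  shows "eigval K M R n \<le> t"
  unfolding eigval_def
  by (rule cInf_lower) (use assms in \<open>auto intro: bdd_belowI[where m=0]\<close>)

lemma eigval_le_of_approximation:
  fixes K :: "real^'d \<Rightarrow> real^'d \<Rightarrow> real"
    and a :: "('d \<Rightarrow> nat) \<Rightarrow> ('d \<Rightarrow> nat) \<Rightarrow> 'j \<Rightarrow> real^'d \<Rightarrow> real" and b :: "'j \<Rightarrow> real^'d \<Rightarrow> real"
  assumes cov: "covariance_kernel K" and smooth: "Cinf_b K" and R: "R > 0"
    and J: "finite J" and b: "\<And>j. b j \<in> borel_measurable lborel" "\<And>j y. \<bar>b j y\<bar> \<le> Cb"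
    and approx: "\<And>\<alpha> \<beta> x y. \<alpha> \<in> S M \<Longrightarrow> \<beta> \<in> S M \<Longrightarrow> x \<in> ball 0 R \<Longrightarrow> y \<in> ball 0 R \<Longrightarrow>
        \<bar>Kab K \<alpha> \<beta> x y - (\<Sum>j\<in>J. a \<alpha> \<beta> j x * b j y)\<bar> \<le> e"
    and e: "e \<ge> 0" and t: "e * measure lborel (ball (0::real^'d) R) * card (S M :: ('d \<Rightarrow> nat) set) < t"
    and n: "card (S M :: ('d \<Rightarrow> nat) set) * card J < n"
  shows "eigval K M R n \<le> t"
proof (rule eigval_le_of_count_above)
  have "0 \<le> e * measure lborel (ball (0::real^'d) R) * card (S M :: ('d \<Rightarrow> nat) set)"
    using e by simp
  then show "0 \<le> t" using t by linarith
  have "count_above K M R t \<le> enat (card (S M :: ('d \<Rightarrow> nat) set) * card J)"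
    by (rule count_above_le_rank[OF cov smooth R J b approx e t])
  also have "\<dots> < enat n" using n by simp
  finally show "count_above K M R t < enat n" .
qed

section \<open>Approximation on a grid of cubes\<close>

definition all_coords :: "'d::finite list" where
  "all_coords = (SOME xs. distinct xs \<and> set xs = UNIV)"

lemma all_coords:
  "distinct (all_coords :: 'd::finite list)" "set (all_coords :: 'd list) = UNIV"
  "length (all_coords :: 'd list) = CARD('d)"
proof -
  have "\<exists>xs::'d list. distinct xs \<and> set xs = UNIV" using finite_distinct_list[of "UNIV :: 'd set"] by auto
  then have "distinct (all_coords :: 'd list) \<and> set (all_coords :: 'd list) = UNIV"
    unfolding all_coords_def by (rule someI_ex)
  then show "distinct (all_coords :: 'd list)" "set (all_coords :: 'd list) = UNIV"
    "length (all_coords :: 'd list) = CARD('d)"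
    using distinct_card by fastforce+
qed

text \<open>Half-open cubes, so that every point of \<open>B\<^sub>R\<close> lies in exactly one of them.\<close>

definition grid_cube :: "real \<Rightarrow> real \<Rightarrow> ('d \<Rightarrow> nat) \<Rightarrow> (real^'d) set" where
  "grid_cube R h z = {y. \<forall>i. - R + real (z i) * h \<le> y $ i \<and> y $ i < - R + (real (z i) + 1) * h}"

definition grid_centre :: "real \<Rightarrow> real \<Rightarrow> ('d \<Rightarrow> nat) \<Rightarrow> real^'d" where
  "grid_centre R h z = (\<chi> i. - R + (real (z i) + 1/2) * h)"

lemma grid_cube_measurable: "grid_cube R h z \<in> sets lborel"
  unfolding grid_cube_def by measurable

lemma grid_cube_centre_dist:
  assumes "y \<in> grid_cube R h z"
  shows "\<bar>y $ i - grid_centre R h z $ i\<bar> \<le> h / 2"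
proof -
  have "- R + real (z i) * h \<le> y $ i" "y $ i < - R + (real (z i) + 1) * h"
    using assms unfolding grid_cube_def by auto
  moreover have "grid_centre R h z $ i = - R + real (z i) * h + h / 2"
    unfolding grid_centre_def by (simp add: algebra_simps)
  ultimately show ?thesis unfolding abs_le_iff by (simp add: algebra_simps)
qed

lemma ball_subset_unique_grid_cube:
  fixes y :: "real^'d" and m :: nat
  assumes R: "R > 0" and m: "m \<ge> 1" and y: "y \<in> ball 0 R"
  shows "\<exists>!z. z \<in> (\<Pi>\<^sub>E i\<in>UNIV. {..<m}) \<and> y \<in> grid_cube R (2 * R / m) z"
proof -
  define h where "h = 2 * R / m"
  have h: "h > 0" using R m by (simp add: h_def)
  have yi: "\<bar>y $ i\<bar> < R" for i using y component_le_norm_cart[of y i] by (simp add: dist_norm)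
  define z where "z i = nat \<lfloor>(y $ i + R) / h\<rfloor>" for i
  have in_cube_iff: "y \<in> grid_cube R h z' \<longleftrightarrow> (\<forall>i. \<lfloor>(y $ i + R) / h\<rfloor> = int (z' i))" for z'
    unfolding grid_cube_def floor_eq_iff using h
    by (simp add: le_divide_eq divide_less_eq algebra_simps)
  have "0 \<le> (y $ i + R) / h" for i
    using yi[of i] h by (intro divide_nonneg_nonneg) auto
  moreover have "(y $ i + R) / h < m" for i
  proof -
    have "(y $ i + R) / h < 2 * R / h" using yi[of i] h by (intro divide_strict_right_mono) auto
    also have "2 * R / h = m" using R m by (simp add: h_def)
    finally show ?thesis .
  qed
  ultimately have "z \<in> (\<Pi>\<^sub>E i\<in>UNIV. {..<m}) \<and> y \<in> grid_cube R h z"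
    unfolding in_cube_iff z_def by (auto simp: nat_less_iff floor_less_iff)
  moreover have "z' = z" if "y \<in> grid_cube R h z'" for z'
    using that unfolding in_cube_iff z_def by (auto simp: fun_eq_iff)
  ultimately show ?thesis unfolding h_def by blast
qed

definition grid_index :: "nat \<Rightarrow> nat \<Rightarrow> (('d::finite \<Rightarrow> nat) \<times> nat list) set" where
  "grid_index m l = (\<Pi>\<^sub>E i\<in>UNIV. {..<m}) \<times> exponent_lists l CARD('d)"

definition grid_fun :: "real \<Rightarrow> real \<Rightarrow> ('d::finite \<Rightarrow> nat) \<times> nat list \<Rightarrow> real^'d \<Rightarrow> real" where
  "grid_fun R h = (\<lambda>(z, p) y. indicator (grid_cube R h z) y * monomial all_coords (grid_centre R h z) p y)"

definition grid_coeff :: "(real^'d \<Rightarrow> real^'d \<Rightarrow> real) \<Rightarrow> real \<Rightarrow> real \<Rightarrow> ('d \<Rightarrow> nat) \<Rightarrow> ('d \<Rightarrow> nat)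
    \<Rightarrow> ('d::finite \<Rightarrow> nat) \<times> nat list \<Rightarrow> real^'d \<Rightarrow> real" where
  "grid_coeff K R h \<alpha> \<beta> = (\<lambda>(z, p) x. taylor_coeff K all_coords (Kab_dirs \<alpha> \<beta>) (grid_centre R h z) p x)"

lemma finite_grid_index: "finite (grid_index m l)"
  unfolding grid_index_def by (simp add: finite_PiE finite_exponent_lists)

lemma card_grid_index: "card (grid_index m l :: (('d::finite \<Rightarrow> nat) \<times> nat list) set) = m ^ CARD('d) * (l+1) ^ CARD('d)"
  unfolding grid_index_def by (simp add: card_cartesian_product card_PiE card_exponent_lists)

lemma grid_fun_measurable: "grid_fun R h j \<in> borel_measurable lborel"
proof -
  obtain z p where j: "j = (z, p)" by (cases j)
  have "monomial all_coords (grid_centre R h z) p \<in> borel_measurable borel"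
    by (rule borel_measurable_continuous_onI) (rule continuous_on_monomial)
  then show ?thesis
    unfolding j grid_fun_def using grid_cube_measurable[of R h z]
    by (simp add: borel_measurable_indicator borel_measurable_times)
qed

lemma grid_fun_abs_le_1:
  assumes "0 \<le> h" "h \<le> 1"
  shows "\<bar>grid_fun R h j y\<bar> \<le> 1"
proof -
  obtain z p where j: "j = (z, p)" by (cases j)
  have "\<bar>monomial all_coords (grid_centre R h z) p y\<bar> \<le> 1" if "y \<in> grid_cube R h z"
  proof (rule monomial_abs_le_1, rule allI)
    fix k show "\<bar>y $ k - grid_centre R h z $ k\<bar> \<le> 1"
      using grid_cube_centre_dist[OF that, of k] assms by linarith
  qed
  then show ?thesis unfolding j grid_fun_def by (simp add: indicator_def)
qed

lemma grid_sum_eq_taylor_poly: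
  fixes y :: "real^'d"
  assumes R: "R > 0" and m: "m \<ge> 1" and y: "y \<in> ball 0 R"
  defines "h \<equiv> 2 * R / m"
  obtains z where "y \<in> grid_cube R h z"
    and "(\<Sum>j\<in>grid_index m l. grid_coeff K R h \<alpha> \<beta> j x * grid_fun R h j y)
      = taylor_poly K l all_coords (Kab_dirs \<alpha> \<beta>) (grid_centre R h z) x y"
proof -
  define Z where "Z = (\<Pi>\<^sub>E i\<in>(UNIV::'d set). {..<m})"
  obtain z0 where z0: "z0 \<in> Z" "y \<in> grid_cube R h z0"
    and unique: "\<And>z. z \<in> Z \<Longrightarrow> y \<in> grid_cube R h z \<Longrightarrow> z = z0"
    using ball_subset_unique_grid_cube[OF R m y] unfolding Z_def h_def by blast
  have "(\<Sum>j\<in>grid_index m l. grid_coeff K R h \<alpha> \<beta> j x * grid_fun R h j y)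
      = (\<Sum>z\<in>Z. \<Sum>p\<in>exponent_lists l CARD('d). taylor_coeff K all_coords (Kab_dirs \<alpha> \<beta>) (grid_centre R h z) p x
          * (indicator (grid_cube R h z) y * monomial all_coords (grid_centre R h z) p y))"
    unfolding grid_index_def grid_coeff_def grid_fun_def Z_def sum.cartesian_product
    by (intro sum.cong refl) (auto split: prod.splits)
  also have "\<dots> = (\<Sum>z\<in>Z. indicator (grid_cube R h z) y
      * taylor_poly K l all_coords (Kab_dirs \<alpha> \<beta>) (grid_centre R h z) x y)"
  proof (rule sum.cong[OF refl])
    fix z assume "z \<in> Z"
    have "taylor_poly K l all_coords (Kab_dirs \<alpha> \<beta>) (grid_centre R h z) x y
        = (\<Sum>p\<in>exponent_lists l CARD('d). taylor_coeff K all_coords (Kab_dirs \<alpha> \<beta>) (grid_centre R h z) p x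
            * monomial all_coords (grid_centre R h z) p y)"
      using taylor_poly_expand[OF all_coords(1), of K l "Kab_dirs \<alpha> \<beta>" "grid_centre R h z" x y]
        all_coords(3)[where 'd='d] by simp
    then show "(\<Sum>p\<in>exponent_lists l CARD('d). taylor_coeff K all_coords (Kab_dirs \<alpha> \<beta>) (grid_centre R h z) p x
          * (indicator (grid_cube R h z) y * monomial all_coords (grid_centre R h z) p y))
        = indicator (grid_cube R h z) y * taylor_poly K l all_coords (Kab_dirs \<alpha> \<beta>) (grid_centre R h z) x y"
      by (simp add: sum_distrib_left mult_ac)
  qed
  also have "\<dots> = (\<Sum>z\<in>Z. if z = z0 then taylor_poly K l all_coords (Kab_dirs \<alpha> \<beta>) (grid_centre R h z) x y else 0)"
  proof (rule sum.cong[OF refl])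
    fix z assume "z \<in> Z"
    show "indicator (grid_cube R h z) y * taylor_poly K l all_coords (Kab_dirs \<alpha> \<beta>) (grid_centre R h z) x y
        = (if z = z0 then taylor_poly K l all_coords (Kab_dirs \<alpha> \<beta>) (grid_centre R h z) x y else 0)"
    proof (cases "z = z0")
      case False
      then have "y \<notin> grid_cube R h z" using unique \<open>z \<in> Z\<close> by blast
      then show ?thesis using False by simp
    qed (use z0(2) in simp)
  qed
  also have "\<dots> = taylor_poly K l all_coords (Kab_dirs \<alpha> \<beta>) (grid_centre R h z0) x y"
    using z0(1) by (subst sum.delta) (auto simp: Z_def finite_PiE)
  finally have "(\<Sum>j\<in>grid_index m l. grid_coeff K R h \<alpha> \<beta> j x * grid_fun R h j y)
      = taylor_poly K l all_coords (Kab_dirs \<alpha> \<beta>) (grid_centre R h z0) x y" .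
  with z0(2) show ?thesis by (rule that)
qed

lemma Kab_grid_approximation:
  fixes K :: "real^'d \<Rightarrow> real^'d \<Rightarrow> real" and M l :: nat
  assumes smooth: "Cinf_b K"
  obtains C where "\<And>\<alpha> \<beta> x y. \<alpha> \<in> S M \<Longrightarrow> \<beta> \<in> S M \<Longrightarrow> \<bar>Kab K \<alpha> \<beta> x y\<bar> \<le> C"
    and "\<And>R m \<alpha> \<beta> x y. R > 0 \<Longrightarrow> m \<ge> 1 \<Longrightarrow> 2 * R / m \<le> 1 \<Longrightarrow> \<alpha> \<in> S M \<Longrightarrow> \<beta> \<in> S M \<Longrightarrow>
      x \<in> ball 0 R \<Longrightarrow> y \<in> ball 0 R \<Longrightarrow>
      \<bar>Kab K \<alpha> \<beta> x y - (\<Sum>j\<in>grid_index m l. grid_coeff K R (2 * R / m) \<alpha> \<beta> j x * grid_fun R (2 * R / m) j y)\<bar>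
        \<le> C * (2 * R / m) ^ (l+1)"
proof -
  define L where "L = Max ((\<lambda>(\<alpha>, \<beta>). length (Kab_dirs \<alpha> \<beta> :: ((real^'d) \<times> (real^'d)) list))
    ` (S M \<times> S M)) + (l+1) * CARD('d)"
  have L: "length (Kab_dirs \<alpha> \<beta> :: ((real^'d) \<times> (real^'d)) list) + (l+1) * CARD('d) \<le> L"
    if "\<alpha> \<in> S M" "\<beta> \<in> S M" for \<alpha> \<beta>
    unfolding L_def using that finite_S by (auto intro!: Max_ge)
  obtain Bd where Bd0: "Bd \<ge> 0"
    and Bd: "\<forall>ws. set ws \<subseteq> basis_dirs \<and> length ws \<le> L \<longrightarrow> (\<forall>z. \<bar>dd ws (joint K) z\<bar> \<le> Bd)"
    using Cinf_b_uniform_bound[OF smooth] by blast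
  show ?thesis
  proof (rule that[of "Bd * (l+2) ^ CARD('d)"])
    show "\<bar>Kab K \<alpha> \<beta> x y\<bar> \<le> Bd * (l+2) ^ CARD('d)" if "\<alpha> \<in> S M" "\<beta> \<in> S M" for \<alpha> \<beta> x y
    proof -
      have "set (Kab_dirs \<alpha> \<beta>) \<subseteq> basis_dirs \<and> length (Kab_dirs \<alpha> \<beta>) \<le> L"
        using L[OF that] Kab_dirs_subset_basis_dirs by fastforce
      then have "\<bar>Kab K \<alpha> \<beta> x y\<bar> \<le> Bd"
        using Bd unfolding Kab_eq_dd by blast
      also have "\<dots> \<le> Bd * (l+2) ^ CARD('d)"
        using mult_left_mono[of 1 "real ((l+2) ^ CARD('d))" Bd] Bd0 by simp
      finally show ?thesis .
    qed
    fix R :: real and m :: nat and \<alpha> \<beta> :: "'d \<Rightarrow> nat" and x y :: "real^'d"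
    assume R: "R > 0" and m: "m \<ge> 1" and h1: "2 * R / m \<le> 1" and \<alpha>\<beta>: "\<alpha> \<in> S M" "\<beta> \<in> S M"
      and "x \<in> ball 0 R" and y: "y \<in> ball 0 R"
    obtain z where z: "y \<in> grid_cube R (2 * R / m) z"
      and eq: "(\<Sum>j\<in>grid_index m l. grid_coeff K R (2 * R / m) \<alpha> \<beta> j x * grid_fun R (2 * R / m) j y)
        = taylor_poly K l all_coords (Kab_dirs \<alpha> \<beta>) (grid_centre R (2 * R / m) z) x y"
      using grid_sum_eq_taylor_poly[OF R m y] by blast
    have "\<bar>dd (Kab_dirs \<alpha> \<beta>) (joint K) (x, y)
        - taylor_poly K l all_coords (Kab_dirs \<alpha> \<beta>) (grid_centre R (2 * R / m) z) x y\<bar>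
      \<le> Bd * (2 * R / m) ^ (l+1) * (l+2) ^ length (all_coords :: 'd list)"
    proof (rule taylor_poly_error[OF smooth Bd h1])
      have "0 \<le> 2 * R / m" using R by simp
      then show "\<forall>k. \<bar>y $ k - grid_centre R (2 * R / m) z $ k\<bar> \<le> 2 * R / m"
        using grid_cube_centre_dist[OF z] by (metis abs_ge_zero field_sum_of_halves le_add_same_cancel2 order_trans)
    qed (use L[OF \<alpha>\<beta>] in \<open>auto simp: all_coords Kab_dirs_subset_basis_dirs\<close>)
    then show "\<bar>Kab K \<alpha> \<beta> x y - (\<Sum>j\<in>grid_index m l. grid_coeff K R (2 * R / m) \<alpha> \<beta> j x
        * grid_fun R (2 * R / m) j y)\<bar> \<le> Bd * (l+2) ^ CARD('d) * (2 * R / m) ^ (l+1)"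
      unfolding eq Kab_eq_dd by (simp add: all_coords mult_ac)
  qed
qed

section \<open>Decay of the eigenvalues\<close>

lemma root_power_eq_powr:
  fixes x :: real
  assumes "0 < x" "0 < d"
  shows "root d x ^ k = x powr (real k / real d)"
proof -
  have "root d x ^ k = (x powr (1 / d)) powr real k"
    using assms by (simp add: root_powr_inverse powr_realpow)
  also have "\<dots> = x powr (real k / real d)" by (simp add: powr_powr)
  finally show ?thesis .
qed

context
  fixes K :: "real^'d \<Rightarrow> real^'d \<Rightarrow> real" and M l :: nat and C :: real
  assumes cov: "covariance_kernel K" and smooth: "Cinf_b K"
    and Kab_le: "\<And>\<alpha> \<beta> x y. \<alpha> \<in> S M \<Longrightarrow> \<beta> \<in> S M \<Longrightarrow> \<bar>Kab K \<alpha> \<beta> x y\<bar> \<le> C"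
    and grid_approx: "\<And>R m \<alpha> \<beta> x y. R > 0 \<Longrightarrow> m \<ge> 1 \<Longrightarrow> 2 * R / m \<le> 1 \<Longrightarrow> \<alpha> \<in> S M \<Longrightarrow> \<beta> \<in> S M \<Longrightarrow>
      x \<in> ball 0 R \<Longrightarrow> y \<in> ball 0 R \<Longrightarrow>
      \<bar>Kab K \<alpha> \<beta> x y - (\<Sum>j\<in>grid_index m l. grid_coeff K R (2 * R / m) \<alpha> \<beta> j x * grid_fun R (2 * R / m) j y)\<bar>
        \<le> C * (2 * R / m) ^ (l+1)"
begin

lemma C_nonneg: "C \<ge> 0"
proof -
  have "(\<lambda>_. 0) \<in> S M" unfolding S_def by simp
  from Kab_le[OF this this] show ?thesis by (meson abs_ge_zero order_trans)
qed

lemma eigval_le_without_grid: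
  assumes R: "R > 0" and n: "n \<ge> 1"
  shows "eigval K M R n \<le> (C + 1) * card (S M :: ('d \<Rightarrow> nat) set) * measure lborel (ball (0::real^'d) R)"
proof (rule eigval_le_of_approximation[OF cov smooth R,
      where J="{} :: unit set" and b="\<lambda>_ _. 0" and Cb=0 and e=C])
  have "0 < measure lborel (ball (0::real^'d) R) * card (S M :: ('d \<Rightarrow> nat) set)"
    using card_S_pos[where 'd='d, of M] content_ball_pos[OF R, of "0::real^'d"] by simp
  moreover have "(C + 1) * card (S M :: ('d \<Rightarrow> nat) set) * measure lborel (ball (0::real^'d) R)
      = C * measure lborel (ball (0::real^'d) R) * card (S M :: ('d \<Rightarrow> nat) set)
        + measure lborel (ball (0::real^'d) R) * card (S M :: ('d \<Rightarrow> nat) set)"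
    by (simp add: algebra_simps)
  ultimately show "C * measure lborel (ball (0::real^'d) R) * card (S M :: ('d \<Rightarrow> nat) set)
      < (C + 1) * card (S M :: ('d \<Rightarrow> nat) set) * measure lborel (ball (0::real^'d) R)"
    by linarith
qed (use Kab_le C_nonneg n in simp_all)

lemma eigval_le_with_grid:
  assumes R: "R > 0" and m: "m \<ge> 1" and h: "2 * R / m \<le> 1"
    and n: "card (S M :: ('d \<Rightarrow> nat) set) * (m ^ CARD('d) * (l+1) ^ CARD('d)) < n"
  shows "eigval K M R n
    \<le> (C + 1) * (2 * R / m) ^ (l+1) * card (S M :: ('d \<Rightarrow> nat) set) * measure lborel (ball (0::real^'d) R)"
proof (rule eigval_le_of_approximation[OF cov smooth R finite_grid_index grid_fun_measurable,
      where a="grid_coeff K R (2 * R / m)" and Cb=1 and e="C * (2 * R / m) ^ (l+1)"])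
  have split: "(C + 1) * a * s * V = C * a * V * s + a * V * s" for a s V :: real
    by (simp add: algebra_simps)
  have "0 < (2 * R / m) ^ (l+1) * measure lborel (ball (0::real^'d) R) * card (S M :: ('d \<Rightarrow> nat) set)"
    using card_S_pos[where 'd='d, of M] content_ball_pos[OF R, of "0::real^'d"] R m by simp
  with split[of "(2 * R / m) ^ (l+1)" "card (S M :: ('d \<Rightarrow> nat) set)" "measure lborel (ball (0::real^'d) R)"]
  show "C * (2 * R / m) ^ (l+1) * measure lborel (ball (0::real^'d) R) * card (S M :: ('d \<Rightarrow> nat) set)
      < (C + 1) * (2 * R / m) ^ (l+1) * card (S M :: ('d \<Rightarrow> nat) set) * measure lborel (ball (0::real^'d) R)"
    by linarith
  show "\<bar>grid_fun R (2 * R / m) j y\<bar> \<le> 1" for j and y :: "real^'d"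
    using R h by (intro grid_fun_abs_le_1) auto
  show "\<bar>Kab K \<alpha> \<beta> x y - (\<Sum>j\<in>grid_index m l. grid_coeff K R (2 * R / m) \<alpha> \<beta> j x * grid_fun R (2 * R / m) j y)\<bar>
      \<le> C * (2 * R / m) ^ (l+1)"
    if "\<alpha> \<in> S M" "\<beta> \<in> S M" "x \<in> ball 0 R" "y \<in> ball 0 R" for \<alpha> \<beta> :: "'d \<Rightarrow> nat" and x y :: "real^'d"
    using grid_approx[OF R m h that] .
  show "0 \<le> C * (2 * R / m) ^ (l+1)" using C_nonneg R by simp
  show "card (S M :: ('d \<Rightarrow> nat) set) * card (grid_index m l :: (('d \<Rightarrow> nat) \<times> nat list) set) < n"
    using n by (simp add: card_grid_index)
qed

lemma eigval_le_scaled: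
  fixes u w :: real
  assumes R: "R \<ge> 1" and n: "n \<ge> 1"
    and u: "u > 0" "u ^ CARD('d) = n"
    and w: "w > 0" "w ^ CARD('d) = 2 * card (S M :: ('d \<Rightarrow> nat) set) * (l+1) ^ CARD('d)"
  shows "eigval K M R n
    \<le> (C + 1) * (4 * R * w / u) ^ (l+1) * card (S M :: ('d \<Rightarrow> nat) set) * measure lborel (ball (0::real^'d) R)"
proof (cases "u < 4 * R * w")
  case True
  then have "1 \<le> (4 * R * w / u) ^ (l+1)" using u by (intro one_le_power) simp
  moreover have "0 \<le> (C + 1) * card (S M :: ('d \<Rightarrow> nat) set) * measure lborel (ball (0::real^'d) R)"
    using C_nonneg by simp
  ultimately have "(C + 1) * card (S M :: ('d \<Rightarrow> nat) set) * measure lborel (ball (0::real^'d) R)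
      \<le> (C + 1) * (4 * R * w / u) ^ (l+1) * card (S M :: ('d \<Rightarrow> nat) set) * measure lborel (ball (0::real^'d) R)"
    using mult_left_mono by (fastforce simp: mult_ac)
  with eigval_le_without_grid[of R n] R n show ?thesis by simp
next
  case False
  define \<rho> where "\<rho> = u / w"
  have \<rho>: "4 * R \<le> \<rho>" "\<rho> > 0" using False u w R unfolding \<rho>_def by (auto simp: le_divide_eq)
  define m where "m = nat \<lfloor>\<rho>\<rfloor>"
  have m: "real m \<le> \<rho>" "\<rho> - 1 < real m" using \<rho> R unfolding m_def by linarith+
  then have m1: "m \<ge> 1" and m2: "\<rho> / 2 \<le> real m" using \<rho> R by linarith+
  have "2 * R / m \<le> 2 * R / (\<rho> / 2)" using m2 \<rho> R by (intro divide_left_mono) auto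
  then have h: "2 * R / m \<le> 4 * R * w / u" using u w by (simp add: \<rho>_def)
  have h1: "4 * R * w / u \<le> 1" using \<rho> u w by (simp add: \<rho>_def field_simps)
  have "real m ^ CARD('d) \<le> \<rho> ^ CARD('d)" using m(1) by (intro power_mono) auto
  then have "card (S M :: ('d \<Rightarrow> nat) set) * real m ^ CARD('d) * (l+1) ^ CARD('d)
      \<le> card (S M :: ('d \<Rightarrow> nat) set) * \<rho> ^ CARD('d) * (l+1) ^ CARD('d)"
    by (intro mult_right_mono mult_left_mono) auto
  then have "real (card (S M :: ('d \<Rightarrow> nat) set) * (m ^ CARD('d) * (l+1) ^ CARD('d)))
      \<le> card (S M :: ('d \<Rightarrow> nat) set) * \<rho> ^ CARD('d) * (l+1) ^ CARD('d)"
    by (simp add: mult.assoc)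
  also have "\<dots> = n / 2"
    using u w card_S_pos[where 'd='d, of M] by (simp add: \<rho>_def power_divide)
  finally have "card (S M :: ('d \<Rightarrow> nat) set) * (m ^ CARD('d) * (l+1) ^ CARD('d)) < n"
    using n by linarith
  moreover have "2 * R / m \<le> 1" using h h1 by linarith
  ultimately have "eigval K M R n
      \<le> (C + 1) * (2 * R / m) ^ (l+1) * card (S M :: ('d \<Rightarrow> nat) set) * measure lborel (ball (0::real^'d) R)"
    using eigval_le_with_grid[of R m n] R m1 by simp
  also have "\<dots> \<le> (C + 1) * (4 * R * w / u) ^ (l+1) * card (S M :: ('d \<Rightarrow> nat) set)
      * measure lborel (ball (0::real^'d) R)"
    using h R C_nonneg by (intro mult_right_mono mult_left_mono power_mono) auto
  finally show ?thesis .
qed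


lemma eigval_power_law:
  "\<exists>A>0. \<forall>R\<ge>1. \<forall>n\<ge>1.
    eigval K M R n \<le> A * R ^ (l + 1 + CARD('d)) / real n powr (real (l + 1) / real CARD('d))"
proof -
  define s where "s = card (S M :: ('d \<Rightarrow> nat) set)"
  define w where "w = root CARD('d) (2 * s * (l+1) ^ CARD('d))"
  define V1 where "V1 = measure lborel (ball (0::real^'d) 1)"
  define A where "A = (C + 1) * (4 * w) ^ (l+1) * s * V1"
  have pos: "s > 0" "w > 0" "V1 > 0" "w ^ CARD('d) = 2 * s * (l+1) ^ CARD('d)"
    using card_S_pos[where 'd='d, of M] by (auto simp: s_def w_def V1_def real_root_pow_pos2)
  have "eigval K M R n \<le> A * R ^ (l + 1 + CARD('d)) / real n powr (real (l + 1) / real CARD('d))"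
    if R: "R \<ge> 1" and n: "n \<ge> 1" for R n
  proof -
    define u where "u = root CARD('d) n"
    have u: "u > 0" "u ^ CARD('d) = n" using n by (auto simp: u_def real_root_pow_pos2)
    have u_pow: "u ^ (l+1) = real n powr (real (l + 1) / real CARD('d))"
      using n unfolding u_def by (intro root_power_eq_powr) auto
    have "measure lborel (ball (0::real^'d) R) = R ^ CARD('d) * V1"
      using content_ball_conv_unit_ball[of R "0::real^'d"] R by (simp add: V1_def)
    then have "eigval K M R n \<le> (C + 1) * (4 * R * w / u) ^ (l+1) * s * (R ^ CARD('d) * V1)"
      using eigval_le_scaled[OF R n u(1,2) pos(2)] pos(4) by (simp add: s_def)
    also have "\<dots> = A * R ^ (l + 1 + CARD('d)) / u ^ (l+1)"
      using u(1) unfolding A_def by (simp add: power_divide power_mult_distrib power_add field_simps)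
    finally show ?thesis unfolding u_pow .
  qed
  moreover have "A > 0" using pos C_nonneg by (simp add: A_def)
  ultimately show ?thesis by blast
qed

end

theorem lemma4p3:
  fixes K :: "real^'d \<Rightarrow> real^'d \<Rightarrow> real"
    and M l :: nat
  assumes "covariance_kernel K"
    and "Cinf_b K"
  shows "\<exists>A>0. \<forall>R\<ge>1. \<forall>n\<ge>1.
           eigval K M R n \<le> A * R ^ (l + 1 + CARD('d)) / real n powr (real (l + 1) / real CARD('d))"
  by (rule Kab_grid_approximation[OF assms(2)]) (rule eigval_power_law[OF assms])

end
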